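(* Let $N,m,d,h$ be natural numbers with $d\geqslant h\geqslant m+2$, and let $c,C,\varepsilon,\eta$ be positive constants; let $\sigma_F,\sigma_G$ be positive parameters. Let $\Xi:\mathbb{R}^h\to\mathbb{R}^d$ be an injective linear map with integer coefficients and $\Xi(\mathbb{Z}^h)=\mathbb{Z}^d\cap\operatorname{im}\Xi$, and $L:\mathbb{R}^h\to\mathbb{R}^m$ a surjective linear map, with $\Vert\Xi\Vert_\infty\leqslant C$, $\Vert L\Vert_\infty\leqslant C$, $\operatorname{dist}(L,V_{\mathrm{rank}}(m,h))\geqslant c$. Let $F:\mathbb{R}^h\to[0,1]$ be a Lipschitz function supported on $[-N,N]^h$ with Lipschitz constant $O(1/(\sigma_FN))$, and $G:\mathbb{R}^m\to[0,1]$ a Lipschitz function supported on $[-\varepsilon,\varepsilon]^m$ with Lipschitz constant $O(1/\sigma_G)$. Let $\widetilde{\mathbf r}\in\mathbb{Z}^d$ with $\Vert\widetilde{\mathbf r}\Vert_\infty=O_{c,C,\varepsilon}(1)$, and let $\chi:\mathbb{R}\to[0,1]$ be an $\eta$-supported measurable function. Then, if $\eta$ is small enough in terms of $m,d,h,C,\varepsilon$, there is a positive real $C_{\Xi,\chi}$ with $C_{\Xi,\chi}\asymp_C1$ such that for all functions $f_1,\dots,f_d:[N]\to[-1,1]$, $$T^{L,\Xi,\widetilde{\mathbf r}}_{F,G,N}(f_1,\dots,f_d)=\frac{1}{C_{\Xi,\chi}\eta^h}\widetilde T^{L,\Xi,\widetilde{\mathbf r}}_{F,G,N}(f_1*\c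hi,\dots,f_d*\chi)+O_{C,c,\varepsilon}(\eta/\sigma_G)+O_{C,c,\varepsilon}(\eta/(\sigma_FN)).$$
   Context: Matrices identified with linear maps; $\Vert\cdot\Vert_\infty$ max absolute entry; $\operatorname{dist}$ $\ell^\infty$ on entries; $V_{\mathrm{rank}}(m,h)$: $m\times h$ matrices of rank $<m$. $\chi$ is $\eta$-supported if it is supported on $[-\eta,\eta]$ and $\chi\equiv1$ on $[-\eta/2,\eta/2]$. For finitely supported $f:\mathbb{Z}\to\mathbb{R}$, $(f*\chi)(x)=\sum_{n\in\mathbb{Z}}f(n)\chi(x-n)$; the $f_j$ are extended by zero to $\mathbb{Z}$. With $\xi_j$ the coordinates of $\Xi$: $T^{L,\Xi,\widetilde{\mathbf r}}_{F,G,N}(f_1,\dots,f_d)=N^{-(h-m)}\sum_{\mathbf n\in\mathbb{Z}^h}\prod_jf_j(\xi_j(\mathbf n)+\widetilde r_j)F(\mathbf n)G(L\mathbf n)$ and, for functions $g_j:\mathbb{R}\to\mathbb{R}$, $\widetilde T^{L,\Xi,\widetilde{\mathbf r}}_{F,G,N}(g_1,\dots,g_d)=N^{-(h-m)}\int_{\mathbb{R}^h}\prod_jg_j(\xi_j(\mathbf x)+\widetilde r_j)F(\mathbf x)G(L\mathbf x)\,d\mathbf x$. Lipschitz constant $M$: $|F(\mathbf x)-F(\mathbf y)|\leqslant M\Vert\mathbf x-\mathbf y\Vert_\infty$. $X\asymp_C1$ means $K^{-1}\leqslant X\leqslant K$ with $K$ depending on $C$ and dimensions; other implied constants may depend on dimensions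 and the listed parameters. *)

theory Defs
  imports "HOL-Analysis.Analysis"
begin

text \<open>Vectors in R^n / Z^n are functions on nat, matrices are nat => nat => real;
  only indices below the dimension matter.\<close>

definition vecs :: "nat \<Rightarrow> (nat \<Rightarrow> real) set" where
  "vecs n = {x. \<forall>k\<ge>n. x k = 0}"

definition ivecs :: "nat \<Rightarrow> (nat \<Rightarrow> real) set" where
  "ivecs n = {x \<in> vecs n. \<forall>k<n. x k \<in> \<int>}"

definition mv :: "nat \<Rightarrow> nat \<Rightarrow> (nat \<Rightarrow> nat \<Rightarrow> real) \<Rightarrow> (nat \<Rightarrow> real) \<Rightarrow> (nat \<Rightarrow> real)" where
  "mv r c A x = (\<lambda>i. if i < r then (\<Sum>k<c. A i k * x k) else 0)"

definition vnorm :: "nat \<Rightarrow> (nat \<Rightarrow> real) \<Rightarrow> real" where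
  "vnorm n x = Max (insert 0 ((\<lambda>k. \<bar>x k\<bar>) ` {..<n}))"

definition mdist :: "nat \<Rightarrow> nat \<Rightarrow> (nat \<Rightarrow> nat \<Rightarrow> real) \<Rightarrow> (nat \<Rightarrow> nat \<Rightarrow> real) \<Rightarrow> real" where
  "mdist r c A B = Max (insert 0 ((\<lambda>(i,k). \<bar>A i k - B i k\<bar>) ` ({..<r} \<times> {..<c})))"

definition lin_indep_cols :: "nat \<Rightarrow> (nat \<Rightarrow> nat \<Rightarrow> real) \<Rightarrow> nat set \<Rightarrow> bool" where
  "lin_indep_cols r M S = (\<forall>a. (\<forall>i<r. (\<Sum>k\<in>S. a k * M i k) = 0) \<longrightarrow> (\<forall>k\<in>S. a k = 0))"

definition mrank :: "nat \<Rightarrow> nat \<Rightarrow> (nat \<Rightarrow> nat \<Rightarrow> real) \<Rightarrow> nat" where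
  "mrank r c M = Max {card S | S. S \<subseteq> {..<c} \<and> lin_indep_cols r M S}"

definition Vrank :: "nat \<Rightarrow> nat \<Rightarrow> (nat \<Rightarrow> nat \<Rightarrow> real) set" where
  "Vrank r c = {M. mrank r c M < r}"

definition zext :: "nat \<Rightarrow> (int \<Rightarrow> real) \<Rightarrow> int \<Rightarrow> real" where
  "zext N f n = (if 1 \<le> n \<and> n \<le> int N then f n else 0)"

definition conv :: "nat \<Rightarrow> (int \<Rightarrow> real) \<Rightarrow> (real \<Rightarrow> real) \<Rightarrow> real \<Rightarrow> real" where
  "conv N f chi x = infsum (\<lambda>n::int. zext N f n * chi (x - of_int n)) UNIV"

definition eta_supported :: "real \<Rightarrow> (real \<Rightarrow> real) \<Rightarrow> bool" where
  "eta_supported \<eta> chi \<longleftrightarrow> (\<forall>x. chi x \<noteq> 0 \<longrightarrow> \<bar>x\<bar> \<le> \<eta>) \<and> (\<forall>x. \<bar>x\<bar> \<le> \<eta>/2 \<longrightarrow> chi x = 1)"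

definition realmat :: "(nat \<Rightarrow> nat \<Rightarrow> int) \<Rightarrow> (nat \<Rightarrow> nat \<Rightarrow> real)" where
  "realmat A = (\<lambda>i k. real_of_int (A i k))"

definition Tcount ::
  "nat \<Rightarrow> nat \<Rightarrow> nat \<Rightarrow> nat \<Rightarrow> (nat \<Rightarrow> nat \<Rightarrow> real) \<Rightarrow> (nat \<Rightarrow> nat \<Rightarrow> int) \<Rightarrow> (nat \<Rightarrow> int)
   \<Rightarrow> ((nat \<Rightarrow> real) \<Rightarrow> real) \<Rightarrow> ((nat \<Rightarrow> real) \<Rightarrow> real) \<Rightarrow> (nat \<Rightarrow> int \<Rightarrow> real) \<Rightarrow> real" where
  "Tcount N m d h L \<Xi> r F G f =
     (1 / real N ^ (h - m)) *
     infsum (\<lambda>n::nat \<Rightarrow> int.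
        (\<Prod>j<d. zext N (f j) ((\<Sum>k<h. \<Xi> j k * n k) + r j))
        * F (\<lambda>k. real_of_int (n k)) * G (mv m h L (\<lambda>k. real_of_int (n k))))
        {n. \<forall>k\<ge>h. n k = 0}"

definition Tint ::
  "nat \<Rightarrow> nat \<Rightarrow> nat \<Rightarrow> nat \<Rightarrow> (nat \<Rightarrow> nat \<Rightarrow> real) \<Rightarrow> (nat \<Rightarrow> nat \<Rightarrow> int) \<Rightarrow> (nat \<Rightarrow> int)
   \<Rightarrow> ((nat \<Rightarrow> real) \<Rightarrow> real) \<Rightarrow> ((nat \<Rightarrow> real) \<Rightarrow> real) \<Rightarrow> (nat \<Rightarrow> real \<Rightarrow> real) \<Rightarrow> real" where
  "Tint N m d h L \<Xi> r F G g =
     (1 / real N ^ (h - m)) *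
     (\<integral>x. (\<Prod>j<d. g j ((\<Sum>k<h. real_of_int (\<Xi> j k) * x k) + real_of_int (r j)))
            * F x * G (mv m h L x) \<partial>(PiM {..<h} (\<lambda>_. lborel)))"

definition Xi_ok :: "nat \<Rightarrow> nat \<Rightarrow> real \<Rightarrow> (nat \<Rightarrow> nat \<Rightarrow> int) \<Rightarrow> bool" where
  "Xi_ok d h C \<Xi> \<longleftrightarrow>
     inj_on (mv d h (realmat \<Xi>)) (vecs h) \<and>
     mv d h (realmat \<Xi>) ` ivecs h = ivecs d \<inter> mv d h (realmat \<Xi>) ` vecs h \<and>
     (\<forall>j<d. \<forall>k<h. \<bar>real_of_int (\<Xi> j k)\<bar> \<le> C)"

definition L_ok :: "nat \<Rightarrow> nat \<Rightarrow> real \<Rightarrow> real \<Rightarrow> (nat \<Rightarrow> nat \<Rightarrow> real) \<Rightarrow> bool" where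
  "L_ok m h c C L \<longleftrightarrow>
     mv m h L ` vecs h = vecs m \<and>
     (\<forall>i<m. \<forall>k<h. \<bar>L i k\<bar> \<le> C) \<and>
     (\<forall>M\<in>Vrank m h. c \<le> mdist m h L M)"

definition F_ok :: "nat \<Rightarrow> nat \<Rightarrow> real \<Rightarrow> real \<Rightarrow> ((nat \<Rightarrow> real) \<Rightarrow> real) \<Rightarrow> bool" where
  "F_ok N h \<sigma> K F \<longleftrightarrow>
     (\<forall>x. 0 \<le> F x \<and> F x \<le> 1) \<and>
     (\<forall>x. F x \<noteq> 0 \<longrightarrow> (\<forall>k<h. \<bar>x k\<bar> \<le> real N)) \<and>
     (\<forall>x y. \<bar>F x - F y\<bar> \<le> K / (\<sigma> * real N) * vnorm h (\<lambda>k. x k - y k))"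

definition G_ok :: "nat \<Rightarrow> real \<Rightarrow> real \<Rightarrow> real \<Rightarrow> ((nat \<Rightarrow> real) \<Rightarrow> real) \<Rightarrow> bool" where
  "G_ok m \<epsilon> \<sigma> K G \<longleftrightarrow>
     (\<forall>x. 0 \<le> G x \<and> G x \<le> 1) \<and>
     (\<forall>x. G x \<noteq> 0 \<longrightarrow> (\<forall>i<m. \<bar>x i\<bar> \<le> \<epsilon>)) \<and>
     (\<forall>x y. \<bar>G x - G y\<bar> \<le> K / \<sigma> * vnorm m (\<lambda>i. x i - y i))"

end

(*
  Because chi vanishes outside [-eta, eta] and Xi is an injective integer matrix, the smoothed
  product prod_j (f_j * chi)(xi_j(x) + r_j) is, at every x, the same weight of the unique lattice
  point n near x times the kernel psi(x - n) = prod_j chi(xi_j(x - n)), whose translates have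
  disjoint supports of diameter O(eta). Hence the continuous count is the sum over n of the same
  weights times the averages of F G(L .) against psi(. - n), with total mass W = int psi of order
  eta^h. Each average differs from F(n) G(L n) by O(eta) times the Lipschitz constant, and only
  the O(N^(h-m)) lattice points close to the support of F G(L .) contribute: as L is far from the
  matrices of lower rank, a combination of its rows is never much smaller than its coefficients,
  and Gaussian elimination counts the lattice points in a box near the kernel of L.
*)

theory Submission
  imports Defs
begin

section \<open>Lipschitz functions of finitely many coordinates\<close>

abbreviation lborel_pi :: "nat \<Rightarrow> (nat \<Rightarrow> real) measure" where
  "lborel_pi h \<equiv> PiM {..<h} (\<lambda>_. lborel)"

lemma vnorm_ge: "k < h \<Longrightarrow> \<bar>x k\<bar> \<le> vnorm h x"
  unfolding vnorm_def by (intro Max_ge) auto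

lemma vnorm_nonneg: "0 \<le> vnorm h x"
  unfolding vnorm_def by (intro Max_ge_iff[THEN iffD2]) auto

lemma vnorm_le: "0 \<le> t \<Longrightarrow> (\<And>k. k < h \<Longrightarrow> \<bar>x k\<bar> \<le> t) \<Longrightarrow> vnorm h x \<le> t"
  unfolding vnorm_def by (intro Max.boundedI) auto

lemma vnorm_eq_0: "(\<And>k. k < h \<Longrightarrow> x k = 0) \<Longrightarrow> vnorm h x = 0"
  using vnorm_le[of 0 h x] vnorm_nonneg[of h x] by auto

lemma vnorm_mv_diff_le:
  assumes "\<forall>i<m. \<forall>k<h. \<bar>L i k\<bar> \<le> C" and "C \<ge> 0"
  shows "vnorm m (\<lambda>i. mv m h L a i - mv m h L b i) \<le> real h * C * vnorm h (\<lambda>k. a k - b k)"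
proof (rule vnorm_le)
  show "0 \<le> real h * C * vnorm h (\<lambda>k. a k - b k)" using assms(2) vnorm_nonneg by simp
  fix i assume i: "i < m"
  have "\<bar>mv m h L a i - mv m h L b i\<bar> = \<bar>\<Sum>k<h. L i k * (a k - b k)\<bar>"
    using i by (simp add: mv_def right_diff_distrib sum_subtractf)
  also have "\<dots> \<le> (\<Sum>k<h. \<bar>L i k\<bar> * \<bar>a k - b k\<bar>)" unfolding abs_mult[symmetric] by (rule sum_abs)
  also have "\<dots> \<le> (\<Sum>k<h. C * vnorm h (\<lambda>k. a k - b k))"
    using assms i by (intro sum_mono mult_mono vnorm_ge) (auto simp: vnorm_nonneg)
  finally show "\<bar>mv m h L a i - mv m h L b i\<bar> \<le> real h * C * vnorm h (\<lambda>k. a k - b k)" by simp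
qed

lemma vnorm_lipschitz_continuous:
  fixes \<Phi> :: "(nat \<Rightarrow> real) \<Rightarrow> real"
  assumes lip: "\<And>x y. \<bar>\<Phi> x - \<Phi> y\<bar> \<le> M * vnorm h (\<lambda>k. x k - y k)"
  shows "continuous_on UNIV \<Phi>"
  unfolding continuous_on_topological
proof (intro ballI allI impI)
  fix x :: "nat \<Rightarrow> real" and B assume "open B" "\<Phi> x \<in> B"
  then obtain e where e: "e > 0" "ball (\<Phi> x) e \<subseteq> B"
    by (meson openE)
  define \<delta> where "\<delta> = e / (\<bar>M\<bar> + 1)"
  have \<delta>: "\<delta> > 0" "\<bar>M\<bar> * \<delta> < e" using e by (auto simp: \<delta>_def field_simps)
  define A where "A = {f. \<forall>i\<in>{..<h}. f (id i) \<in> ball (x i) \<delta>}"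
  have "open A" unfolding A_def by (rule product_topology_basis') auto
  moreover have "x \<in> A" using \<delta> by (auto simp: A_def)
  moreover have "\<Phi> y \<in> B" if "y \<in> A" for y
  proof -
    have "vnorm h (\<lambda>k. y k - x k) \<le> \<delta>"
      using that \<delta> by (intro vnorm_le) (auto simp: A_def dist_real_def abs_minus_commute intro: less_imp_le)
    then have "\<bar>M\<bar> * vnorm h (\<lambda>k. y k - x k) \<le> \<bar>M\<bar> * \<delta>" by (simp add: mult_left_mono)
    then have "\<bar>\<Phi> y - \<Phi> x\<bar> < e"
      using lip[of y x] \<delta> vnorm_nonneg[of h "\<lambda>k. y k - x k"]
      by (smt (verit) mult_right_mono)
    then show ?thesis using e by (auto simp: dist_real_def)
  qed
  ultimately show "\<exists>A. open A \<and> x \<in> A \<and> (\<forall>y\<in>UNIV. y \<in> A \<longrightarrow> \<Phi> y \<in> B)" by blast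
qed

lemma vnorm_lipschitz_measurable:
  fixes \<Phi> :: "(nat \<Rightarrow> real) \<Rightarrow> real"
  assumes lip: "\<And>x y. \<bar>\<Phi> x - \<Phi> y\<bar> \<le> M * vnorm h (\<lambda>k. x k - y k)"
  shows "\<Phi> \<in> borel_measurable (lborel_pi h)"
proof -
  define cut where "cut x = (\<lambda>k. if k < h then x k else (0::real))" for x :: "nat \<Rightarrow> real"
  have cut: "\<Phi> x = \<Phi> (cut x)" for x
    using lip[of x "cut x"] vnorm_eq_0[of h "\<lambda>k. x k - cut x k"] by (simp add: cut_def)
  have "cut \<in> borel_measurable (lborel_pi h)"
    unfolding cut_def
  proof (rule measurable_coordinatewise_then_product)
    fix i show "(\<lambda>x. if i < h then x i else 0) \<in> borel_measurable (lborel_pi h)"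
      by (cases "i < h") (auto intro!: measurable_component_singleton simp: measurable_cong_sets[OF refl sets_lborel])
  qed
  moreover have "\<Phi> \<in> borel_measurable borel"
    by (rule borel_measurable_continuous_onI[OF vnorm_lipschitz_continuous[OF lip]])
  ultimately have "(\<lambda>x. \<Phi> (cut x)) \<in> borel_measurable (lborel_pi h)"
    by (auto intro: measurable_compose)
  then show ?thesis using cut by simp
qed

section \<open>Integer matrices\<close>

definition matrix_injective :: "nat set \<Rightarrow> nat set \<Rightarrow> (nat \<Rightarrow> nat \<Rightarrow> real) \<Rightarrow> bool" where
  "matrix_injective J I A \<longleftrightarrow> (\<forall>x. (\<forall>j\<in>J. (\<Sum>k\<in>I. A j k * x k) = 0) \<longrightarrow> (\<forall>k\<in>I. x k = 0))"

definition int_matrix_bounded :: "real \<Rightarrow> nat set \<Rightarrow> nat set \<Rightarrow> (nat \<Rightarrow> nat \<Rightarrow> real) \<Rightarrow> bool" where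
  "int_matrix_bounded C J I A \<longleftrightarrow> (\<forall>j\<in>J. \<forall>k\<in>I. A j k \<in> \<int> \<and> \<bar>A j k\<bar> \<le> C)"

definition inverse_bounded :: "real \<Rightarrow> nat set \<Rightarrow> nat set \<Rightarrow> (nat \<Rightarrow> nat \<Rightarrow> real) \<Rightarrow> bool" where
  "inverse_bounded K J I A \<longleftrightarrow>
     (\<forall>x t. (\<forall>j\<in>J. \<bar>\<Sum>k\<in>I. A j k * x k\<bar> \<le> t) \<longrightarrow> (\<forall>k\<in>I. \<bar>x k\<bar> \<le> K * t))"

definition near_integers_in_range :: "real \<Rightarrow> nat set \<Rightarrow> nat set \<Rightarrow> (nat \<Rightarrow> nat \<Rightarrow> real) \<Rightarrow> bool" where
  "near_integers_in_range \<delta> J I A \<longleftrightarrow>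
     (\<forall>x b. (\<forall>j\<in>J. b j \<in> \<int> \<and> \<bar>(\<Sum>k\<in>I. A j k * x k) - b j\<bar> \<le> \<delta>) \<longrightarrow>
        (\<exists>y. \<forall>j\<in>J. (\<Sum>k\<in>I. A j k * y k) = b j))"

text \<open>Fraction-free elimination with pivot \<open>A j1 k1\<close>, which keeps integer matrices integral.\<close>
definition eliminate :: "nat \<Rightarrow> nat \<Rightarrow> (nat \<Rightarrow> nat \<Rightarrow> real) \<Rightarrow> nat \<Rightarrow> nat \<Rightarrow> real" where
  "eliminate j1 k1 A j k = A j1 k1 * A j k - A j k1 * A j1 k"

lemma sum_eliminate:
  assumes "finite I" "k1 \<in> I"
  shows "(\<Sum>k\<in>I-{k1}. eliminate j1 k1 A j k * x k)
       = A j1 k1 * (\<Sum>k\<in>I. A j k * x k) - A j k1 * (\<Sum>k\<in>I. A j1 k * x k)"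
proof -
  have a: "(\<Sum>k\<in>I. A j k * x k) = A j k1 * x k1 + (\<Sum>k\<in>I-{k1}. A j k * x k)"
    and b: "(\<Sum>k\<in>I. A j1 k * x k) = A j1 k1 * x k1 + (\<Sum>k\<in>I-{k1}. A j1 k * x k)"
    using assms by (simp_all add: sum.remove)
  show ?thesis unfolding a b eliminate_def
    by (simp add: algebra_simps sum_subtractf sum_distrib_left)
qed

lemma sum_fun_upd_outside:
  "k1 \<notin> I \<Longrightarrow> (\<Sum>k\<in>I. B k * (x(k1 := v)) k) = (\<Sum>k\<in>I. B k * x k)"
  by (intro sum.cong) auto

lemma abs_mult_diff_le: "\<bar>(p::real) * a - q * b\<bar> \<le> \<bar>p\<bar> * \<bar>a\<bar> + \<bar>q\<bar> * \<bar>b\<bar>"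
  by (metis abs_mult abs_triangle_ineq4)

lemma matrix_injective_pivot:
  assumes "finite I" "k1 \<in> I" "matrix_injective J I A"
  obtains j1 where "j1 \<in> J" "A j1 k1 \<noteq> 0"
proof -
  have "\<exists>j1\<in>J. A j1 k1 \<noteq> 0"
  proof (rule ccontr)
    assume "\<not> ?thesis"
    then have "\<forall>j\<in>J. (\<Sum>k\<in>I. A j k * (if k = k1 then 1 else 0)) = 0"
      using assms(1,2) by (simp add: if_distrib sum.delta cong: if_cong)
    then show False using assms(2,3) unfolding matrix_injective_def by fastforce
  qed
  then show ?thesis using that by blast
qed

lemma matrix_injective_eliminate:
  assumes I: "finite I" "k1 \<in> I" and p: "A j1 k1 \<noteq> 0" and inj: "matrix_injective J I A"
  shows "matrix_injective (J - {j1}) (I - {k1}) (eliminate j1 k1 A)"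
  unfolding matrix_injective_def
proof (intro allI impI)
  fix x' assume h: "\<forall>j\<in>J - {j1}. (\<Sum>k\<in>I - {k1}. eliminate j1 k1 A j k * x' k) = 0"
  define x where "x = x'(k1 := - (\<Sum>k\<in>I-{k1}. A j1 k * x' k) / A j1 k1)"
  have same: "(\<Sum>k\<in>I-{k1}. B k * x k) = (\<Sum>k\<in>I-{k1}. B k * x' k)" for B
    unfolding x_def by (simp add: sum_fun_upd_outside)
  have pivot_row: "(\<Sum>k\<in>I. A j1 k * x k) = 0"
    using sum.remove[OF I, of "\<lambda>k. A j1 k * x k"] same[of "A j1"] p by (simp add: x_def)
  have "(\<Sum>k\<in>I. A j k * x k) = 0" if "j \<in> J" for j
  proof (cases "j = j1")
    case False
    then have "A j1 k1 * (\<Sum>k\<in>I. A j k * x k) = 0"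
      using h that sum_eliminate[OF I, of j1 A j x] same pivot_row by simp
    then show ?thesis using p by simp
  qed (use pivot_row in simp)
  then have "\<forall>k\<in>I. x k = 0" using inj unfolding matrix_injective_def by blast
  then show "\<forall>k\<in>I - {k1}. x' k = 0" unfolding x_def by (metis DiffD1 DiffD2 fun_upd_other singletonI)
qed

lemma matrix_injective_card_le:
  assumes "finite J" "finite I" "matrix_injective J I A"
  shows "card I \<le> card J"
  using assms
proof (induction "card I" arbitrary: I J A)
  case (Suc n)
  then obtain k1 where k1: "k1 \<in> I" by (metis card.empty ex_in_conv nat.simps(3))
  obtain j1 where j1: "j1 \<in> J" "A j1 k1 \<noteq> 0"
    using matrix_injective_pivot[OF Suc.prems(2) k1 Suc.prems(3)] .
  have "card (I - {k1}) \<le> card (J - {j1})"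
  proof (rule Suc.hyps(1))
    show "n = card (I - {k1})" using Suc.hyps(2) Suc.prems(2) k1 by simp
  qed (use Suc.prems matrix_injective_eliminate[OF Suc.prems(2) k1 j1(2) Suc.prems(3)] in auto)
  moreover have "card J > 0" using Suc.prems(1) j1(1) card_gt_0_iff by blast
  ultimately show ?case using Suc.hyps(2) Suc.prems(1,2) k1 j1(1) by simp
qed simp

lemma int_matrix_bounded_eliminate:
  assumes A: "int_matrix_bounded C J I A" and "j1 \<in> J" "k1 \<in> I"
  shows "int_matrix_bounded (2 * C * C) (J - {j1}) (I - {k1}) (eliminate j1 k1 A)"
  unfolding int_matrix_bounded_def
proof (intro ballI conjI)
  fix j k assume "j \<in> J - {j1}" "k \<in> I - {k1}"
  then have entries: "A j1 k1 \<in> \<int>" "A j k \<in> \<int>" "A j k1 \<in> \<int>" "A j1 k \<in> \<int>"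
    "\<bar>A j1 k1\<bar> \<le> C" "\<bar>A j k\<bar> \<le> C" "\<bar>A j k1\<bar> \<le> C" "\<bar>A j1 k\<bar> \<le> C"
    using A assms by (auto simp: int_matrix_bounded_def)
  then show "eliminate j1 k1 A j k \<in> \<int>" by (simp add: eliminate_def)
  have "\<bar>eliminate j1 k1 A j k\<bar> \<le> \<bar>A j1 k1\<bar> * \<bar>A j k\<bar> + \<bar>A j k1\<bar> * \<bar>A j1 k\<bar>"
    unfolding eliminate_def by (rule abs_mult_diff_le)
  also have "\<dots> \<le> C * C + C * C" using entries by (intro add_mono mult_mono) auto
  finally show "\<bar>eliminate j1 k1 A j k\<bar> \<le> 2 * C * C" by simp
qed

lemma abs_pivot_coordinate_le:
  assumes I: "finite I" "k1 \<in> I" and p: "1 \<le> \<bar>a k1\<bar>" and a: "\<forall>k\<in>I. \<bar>a k\<bar> \<le> C"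
    and x: "\<forall>k\<in>I-{k1}. \<bar>x k\<bar> \<le> M" and M: "0 \<le> M" and t: "\<bar>\<Sum>k\<in>I. a k * x k\<bar> \<le> t"
  shows "\<bar>x k1\<bar> \<le> t + real (card I) * C * M"
proof -
  have C: "0 \<le> C" using a I by force
  have "\<bar>\<Sum>k\<in>I-{k1}. a k * x k\<bar> \<le> (\<Sum>k\<in>I-{k1}. \<bar>a k\<bar> * \<bar>x k\<bar>)"
    unfolding abs_mult[symmetric] by (rule sum_abs)
  also have "\<dots> \<le> (\<Sum>k\<in>I-{k1}. C * M)" using a x C by (intro sum_mono mult_mono) auto
  also have "\<dots> = real (card (I - {k1})) * (C * M)" by simp
  also have "\<dots> \<le> real (card I) * (C * M)"
    using I C M by (intro mult_right_mono) (auto simp: card_mono)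
  finally have rest: "\<bar>\<Sum>k\<in>I-{k1}. a k * x k\<bar> \<le> real (card I) * C * M" by (simp add: mult.assoc)
  have "a k1 * x k1 = (\<Sum>k\<in>I. a k * x k) - (\<Sum>k\<in>I-{k1}. a k * x k)"
    using sum.remove[OF I, of "\<lambda>k. a k * x k"] by simp
  then have "\<bar>a k1\<bar> * \<bar>x k1\<bar> \<le> \<bar>\<Sum>k\<in>I. a k * x k\<bar> + \<bar>\<Sum>k\<in>I-{k1}. a k * x k\<bar>"
    by (metis abs_mult abs_triangle_ineq4)
  moreover have "\<bar>x k1\<bar> \<le> \<bar>a k1\<bar> * \<bar>x k1\<bar>" using p by (simp add: mult_le_cancel_right1)
  ultimately show ?thesis using rest t by linarith
qed

text \<open>The pivot of an integer matrix has modulus at least 1: this is why the constants below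
  depend only on the size of the matrix and of its entries.\<close>

lemma inverse_bounded_eliminate:
  assumes I: "finite I" "k1 \<in> I" and j1: "j1 \<in> J" "A j1 k1 \<noteq> 0"
    and A: "int_matrix_bounded C J I A" and C: "C \<ge> 1" and K': "K' \<ge> 0"
    and red: "inverse_bounded K' (J - {j1}) (I - {k1}) (eliminate j1 k1 A)"
  shows "inverse_bounded (1 + 2 * C * K' + 2 * real (card I) * C * C * K') J I A"
  unfolding inverse_bounded_def
proof (intro allI impI ballI)
  fix x t k assume h: "\<forall>j\<in>J. \<bar>\<Sum>k\<in>I. A j k * x k\<bar> \<le> t" and k: "k \<in> I"
  have t: "t \<ge> 0" using h j1 by (meson abs_ge_zero order_trans)
  have "\<bar>\<Sum>k\<in>I-{k1}. eliminate j1 k1 A j k * x k\<bar> \<le> 2 * C * t" if j: "j \<in> J - {j1}" for j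
  proof -
    have "\<bar>\<Sum>k\<in>I-{k1}. eliminate j1 k1 A j k * x k\<bar>
        \<le> \<bar>A j1 k1\<bar> * \<bar>\<Sum>k\<in>I. A j k * x k\<bar> + \<bar>A j k1\<bar> * \<bar>\<Sum>k\<in>I. A j1 k * x k\<bar>"
      unfolding sum_eliminate[OF I] by (rule abs_mult_diff_le)
    also have "\<dots> \<le> C * t + C * t"
      using h j j1 A I C by (intro add_mono mult_mono) (auto simp: int_matrix_bounded_def)
    finally show ?thesis by simp
  qed
  then have others: "\<forall>k\<in>I-{k1}. \<bar>x k\<bar> \<le> K' * (2 * C * t)"
    using red unfolding inverse_bounded_def by blast
  have pivot: "\<bar>x k1\<bar> \<le> t + real (card I) * C * (K' * (2 * C * t))"
  proof (rule abs_pivot_coordinate_le[OF I _ _ others])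
    show "1 \<le> \<bar>A j1 k1\<bar>" using A I j1 Ints_nonzero_abs_ge1 by (auto simp: int_matrix_bounded_def)
  qed (use A j1 h K' C t in \<open>auto simp: int_matrix_bounded_def\<close>)
  have nonneg: "0 \<le> K' * (2 * C * t)" "0 \<le> t + real (card I) * C * (K' * (2 * C * t))"
    using K' C t by simp_all
  have "\<bar>x k\<bar> \<le> K' * (2 * C * t) + (t + real (card I) * C * (K' * (2 * C * t)))"
  proof (cases "k = k1")
    case True
    then have "\<bar>x k\<bar> \<le> t + real (card I) * C * (K' * (2 * C * t))" using pivot by simp
    then show ?thesis using nonneg by linarith
  next
    case False
    then have "\<bar>x k\<bar> \<le> K' * (2 * C * t)" using others k by blast
    then show ?thesis using nonneg by linarith
  qed
  also have "\<dots> = (1 + 2 * C * K' + 2 * real (card I) * C * C * K') * t" by (simp add: algebra_simps)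
  finally show "\<bar>x k\<bar> \<le> (1 + 2 * C * K' + 2 * real (card I) * C * C * K') * t" .
qed

lemma near_integers_in_range_eliminate:
  assumes I: "finite I" "k1 \<in> I" and j1: "j1 \<in> J" "A j1 k1 \<noteq> 0"
    and A: "int_matrix_bounded C J I A" and C: "C \<ge> 1"
    and red: "near_integers_in_range \<delta>' (J - {j1}) (I - {k1}) (eliminate j1 k1 A)"
  shows "near_integers_in_range (\<delta>' / (2 * C)) J I A"
  unfolding near_integers_in_range_def
proof (intro allI impI)
  fix x b assume h: "\<forall>j\<in>J. b j \<in> \<int> \<and> \<bar>(\<Sum>k\<in>I. A j k * x k) - b j\<bar> \<le> \<delta>' / (2 * C)"
  define p where "p = A j1 k1"
  have p: "p \<in> \<int>" "p \<noteq> 0" "\<bar>p\<bar> \<le> C" using A I j1 by (auto simp: p_def int_matrix_bounded_def)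
  define b' where "b' j = p * b j - A j k1 * b j1" for j
  have "b' j \<in> \<int> \<and> \<bar>(\<Sum>k\<in>I-{k1}. eliminate j1 k1 A j k * x k) - b' j\<bar> \<le> \<delta>'"
    if j: "j \<in> J - {j1}" for j
  proof
    have entries: "A j k1 \<in> \<int>" "\<bar>A j k1\<bar> \<le> C" using A j I by (auto simp: int_matrix_bounded_def)
    then show "b' j \<in> \<int>" unfolding b'_def using h j j1 p by auto
    have "(\<Sum>k\<in>I-{k1}. eliminate j1 k1 A j k * x k) - b' j
        = p * ((\<Sum>k\<in>I. A j k * x k) - b j) - A j k1 * ((\<Sum>k\<in>I. A j1 k * x k) - b j1)"
      unfolding sum_eliminate[OF I] b'_def p_def by (simp add: algebra_simps)
    then have "\<bar>(\<Sum>k\<in>I-{k1}. eliminate j1 k1 A j k * x k) - b' j\<bar>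
        \<le> \<bar>p\<bar> * \<bar>(\<Sum>k\<in>I. A j k * x k) - b j\<bar> + \<bar>A j k1\<bar> * \<bar>(\<Sum>k\<in>I. A j1 k * x k) - b j1\<bar>"
      by (simp only: abs_mult_diff_le)
    also have "\<dots> \<le> C * (\<delta>' / (2 * C)) + C * (\<delta>' / (2 * C))"
      using h j j1 p entries by (intro add_mono mult_mono) auto
    also have "\<dots> = \<delta>'" using C by simp
    finally show "\<bar>(\<Sum>k\<in>I-{k1}. eliminate j1 k1 A j k * x k) - b' j\<bar> \<le> \<delta>'" .
  qed
  then obtain y' where y': "\<forall>j\<in>J - {j1}. (\<Sum>k\<in>I-{k1}. eliminate j1 k1 A j k * y' k) = b' j"
    using red unfolding near_integers_in_range_def by blast
  define y where "y = y'(k1 := (b j1 - (\<Sum>k\<in>I-{k1}. A j1 k * y' k)) / p)"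
  have same: "(\<Sum>k\<in>I-{k1}. B k * y k) = (\<Sum>k\<in>I-{k1}. B k * y' k)" for B
    unfolding y_def by (simp add: sum_fun_upd_outside)
  have pivot_row: "(\<Sum>k\<in>I. A j1 k * y k) = b j1"
    using sum.remove[OF I, of "\<lambda>k. A j1 k * y k"] same[of "A j1"] p by (simp add: y_def p_def)
  have "(\<Sum>k\<in>I. A j k * y k) = b j" if j: "j \<in> J" for j
  proof (cases "j = j1")
    case False
    then have "(\<Sum>k\<in>I-{k1}. eliminate j1 k1 A j k * y k) = b' j" using y' j same by simp
    moreover have "(\<Sum>k\<in>I-{k1}. eliminate j1 k1 A j k * y k) = p * (\<Sum>k\<in>I. A j k * y k) - A j k1 * b j1"
      unfolding sum_eliminate[OF I] pivot_row p_def ..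
    ultimately have "p * (\<Sum>k\<in>I. A j k * y k) = p * b j" unfolding b'_def by linarith
    then show ?thesis using p(2) by simp
  qed (use pivot_row in simp)
  then show "\<exists>y. \<forall>j\<in>J. (\<Sum>k\<in>I. A j k * y k) = b j" by blast
qed

lemma int_matrix_pivot_step:
  assumes I: "finite I" "card I = Suc n" and A: "int_matrix_bounded C J I A"
    and inj: "matrix_injective J I A"
  obtains j1 k1 where "j1 \<in> J" "k1 \<in> I" "A j1 k1 \<noteq> 0" "finite (I - {k1})" "card (I - {k1}) = n"
    "int_matrix_bounded (2 * C * C) (J - {j1}) (I - {k1}) (eliminate j1 k1 A)"
    "matrix_injective (J - {j1}) (I - {k1}) (eliminate j1 k1 A)"
proof -
  obtain k1 where k1: "k1 \<in> I" using I by (metis card.empty ex_in_conv nat.simps(3))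
  obtain j1 where j1: "j1 \<in> J" "A j1 k1 \<noteq> 0" using matrix_injective_pivot[OF I(1) k1 inj] .
  show ?thesis
    using I k1 int_matrix_bounded_eliminate[OF A j1(1) k1] matrix_injective_eliminate[OF I(1) k1 j1(2) inj]
    by (intro that[OF j1(1) k1 j1(2)]) simp_all
qed

lemma int_matrix_inverse_bounded:
  assumes "C \<ge> 1"
  shows "\<exists>K>0. \<forall>J I A. finite I \<and> card I = n \<and> int_matrix_bounded C J I A \<and> matrix_injective J I A
           \<longrightarrow> inverse_bounded K J I A"
  using assms
proof (induction n arbitrary: C)
  case 0
  show ?case by (intro exI[of _ 1]) (auto simp: inverse_bounded_def)
next
  case (Suc n)
  have "2 * C * C \<ge> 1" using Suc.prems by (smt (verit) mult_ge1_I)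
  then obtain K' where K': "K' > 0" and IH: "\<forall>J I A. finite I \<and> card I = n \<and>
      int_matrix_bounded (2 * C * C) J I A \<and> matrix_injective J I A \<longrightarrow> inverse_bounded K' J I A"
    using Suc.IH by blast
  show ?case
  proof (intro exI[of _ "1 + 2 * C * K' + 2 * real (Suc n) * C * C * K'"] conjI allI impI)
    show "1 + 2 * C * K' + 2 * real (Suc n) * C * C * K' > 0"
      using K' Suc.prems by (simp add: add_pos_nonneg)
    fix J I A assume "finite I \<and> card I = Suc n \<and> int_matrix_bounded C J I A \<and> matrix_injective J I A"
    then have I: "finite I" "card I = Suc n" and A: "int_matrix_bounded C J I A"
      and inj: "matrix_injective J I A" by auto
    obtain j1 k1 where piv: "j1 \<in> J" "k1 \<in> I" "A j1 k1 \<noteq> 0" and red: "finite (I - {k1})"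
      "card (I - {k1}) = n" "int_matrix_bounded (2 * C * C) (J - {j1}) (I - {k1}) (eliminate j1 k1 A)"
      "matrix_injective (J - {j1}) (I - {k1}) (eliminate j1 k1 A)"
      by (rule int_matrix_pivot_step[OF I A inj])
    have "inverse_bounded K' (J - {j1}) (I - {k1}) (eliminate j1 k1 A)"
      using red by (intro IH[rule_format]) simp
    then show "inverse_bounded (1 + 2 * C * K' + 2 * real (Suc n) * C * C * K') J I A"
      using inverse_bounded_eliminate[OF I(1) piv(2,1,3) A Suc.prems] K' I by simp
  qed
qed

lemma int_matrix_near_integers_in_range:
  assumes "C \<ge> 1"
  shows "\<exists>\<delta>>0. \<forall>J I A. finite I \<and> card I = n \<and> int_matrix_bounded C J I A \<and> matrix_injective J I A
           \<longrightarrow> near_integers_in_range \<delta> J I A"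
  using assms
proof (induction n arbitrary: C)
  case 0
  have "near_integers_in_range (1/2) J {} A" for J A
    unfolding near_integers_in_range_def
  proof (intro allI impI)
    fix x b assume "\<forall>j\<in>J. b j \<in> \<int> \<and> \<bar>(\<Sum>k\<in>{}. A j k * x k) - b j\<bar> \<le> 1 / 2"
    then have "b j = 0" if "j \<in> J" for j
      using that Ints_nonzero_abs_ge1[of "b j"] by fastforce
    then show "\<exists>y. \<forall>j\<in>J. (\<Sum>k\<in>{}. A j k * y k) = b j" by simp
  qed
  then show ?case by (intro exI[of _ "1/2"]) auto
next
  case (Suc n)
  have "2 * C * C \<ge> 1" using Suc.prems by (smt (verit) mult_ge1_I)
  then obtain \<delta>' where \<delta>': "\<delta>' > 0" and IH: "\<forall>J I A. finite I \<and> card I = n \<and>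
      int_matrix_bounded (2 * C * C) J I A \<and> matrix_injective J I A \<longrightarrow> near_integers_in_range \<delta>' J I A"
    using Suc.IH by blast
  show ?case
  proof (intro exI[of _ "\<delta>' / (2 * C)"] conjI allI impI)
    show "\<delta>' / (2 * C) > 0" using \<delta>' Suc.prems by simp
    fix J I A assume "finite I \<and> card I = Suc n \<and> int_matrix_bounded C J I A \<and> matrix_injective J I A"
    then have I: "finite I" "card I = Suc n" and A: "int_matrix_bounded C J I A"
      and inj: "matrix_injective J I A" by auto
    obtain j1 k1 where piv: "j1 \<in> J" "k1 \<in> I" "A j1 k1 \<noteq> 0" and red: "finite (I - {k1})"
      "card (I - {k1}) = n" "int_matrix_bounded (2 * C * C) (J - {j1}) (I - {k1}) (eliminate j1 k1 A)"
      "matrix_injective (J - {j1}) (I - {k1}) (eliminate j1 k1 A)"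
      by (rule int_matrix_pivot_step[OF I A inj])
    have "near_integers_in_range \<delta>' (J - {j1}) (I - {k1}) (eliminate j1 k1 A)"
      using red by (intro IH[rule_format]) simp
    then show "near_integers_in_range (\<delta>' / (2 * C)) J I A"
      using near_integers_in_range_eliminate[OF I(1) piv(2,1,3) A Suc.prems] by simp
  qed
qed

section \<open>Lattice points near the kernel of a robust matrix\<close>

definition ibox :: "nat set \<Rightarrow> real \<Rightarrow> (nat \<Rightarrow> int) set" where
  "ibox I N' = {n. (\<forall>k. k \<notin> I \<longrightarrow> n k = 0) \<and> (\<forall>k\<in>I. \<bar>real_of_int (n k)\<bar> \<le> N')}"

lemma card_int_interval:
  assumes "0 \<le> M"
  shows "finite {v::int. \<bar>real_of_int v - a\<bar> \<le> M}"
    and "real (card {v::int. \<bar>real_of_int v - a\<bar> \<le> M}) \<le> 2 * M + 1"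
proof -
  have sub: "{v::int. \<bar>real_of_int v - a\<bar> \<le> M} \<subseteq> {\<lceil>a - M\<rceil>..\<lfloor>a + M\<rfloor>}"
    by (auto simp: abs_le_iff ceiling_le_iff le_floor_iff)
  show "finite {v::int. \<bar>real_of_int v - a\<bar> \<le> M}" by (rule finite_subset[OF sub]) simp
  have "real (card {v::int. \<bar>real_of_int v - a\<bar> \<le> M}) \<le> real (card {\<lceil>a - M\<rceil>..\<lfloor>a + M\<rfloor>})"
    using card_mono[OF _ sub] by simp
  also have "\<dots> \<le> 2 * M + 1"
  proof (cases "\<lfloor>a + M\<rfloor> + 1 - \<lceil>a - M\<rceil> \<ge> 0")
    case True
    then have "real (card {\<lceil>a - M\<rceil>..\<lfloor>a + M\<rfloor>}) = real_of_int \<lfloor>a + M\<rfloor> + 1 - real_of_int \<lceil>a - M\<rceil>"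
      by simp
    also have "\<dots> \<le> (a + M) + 1 - (a - M)"
      using of_int_floor_le[of "a + M"] le_of_int_ceiling[of "a - M"] by linarith
    finally show ?thesis by simp
  qed (use assms in simp)
  finally show "real (card {v::int. \<bar>real_of_int v - a\<bar> \<le> M}) \<le> 2 * M + 1" .
qed

lemma card_int_slab:
  assumes "c \<le> \<bar>p\<bar>" "0 < c" "0 \<le> e"
  shows "finite {v::int. \<bar>p * real_of_int v + s\<bar> \<le> e}"
    and "real (card {v::int. \<bar>p * real_of_int v + s\<bar> \<le> e}) \<le> 2 * e / c + 1"
proof -
  have p: "p \<noteq> 0" using assms by auto
  have "\<bar>p * v + s\<bar> = \<bar>p\<bar> * \<bar>v - (- s / p)\<bar>" for v
    using p by (simp add: abs_mult[symmetric] field_simps)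
  then have eq: "{v::int. \<bar>p * real_of_int v + s\<bar> \<le> e} = {v. \<bar>real_of_int v - (- s / p)\<bar> \<le> e / \<bar>p\<bar>}"
    using p by (simp add: field_simps mult.commute)
  have e: "0 \<le> e / \<bar>p\<bar>" using assms by simp
  show "finite {v::int. \<bar>p * real_of_int v + s\<bar> \<le> e}"
    unfolding eq by (rule card_int_interval(1)[OF e])
  have "real (card {v::int. \<bar>p * real_of_int v + s\<bar> \<le> e}) \<le> 2 * (e / \<bar>p\<bar>) + 1"
    unfolding eq by (rule card_int_interval(2)[OF e])
  also have "\<dots> \<le> 2 * e / c + 1" using assms by (simp add: frac_le)
  finally show "real (card {v::int. \<bar>p * real_of_int v + s\<bar> \<le> e}) \<le> 2 * e / c + 1" .
qed

lemma finite_card_ibox: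
  assumes "finite I" "0 \<le> N'"
  shows "finite (ibox I N') \<and> real (card (ibox I N')) \<le> (2 * N' + 1) ^ card I"
  using assms(1)
proof (induction I rule: finite_induct)
  case empty
  have "ibox {} N' = {\<lambda>_. 0}" by (auto simp: ibox_def)
  then show ?case by simp
next
  case (insert i I)
  define S where "S = {v::int. \<bar>real_of_int v - 0\<bar> \<le> N'}"
  have S: "finite S" "real (card S) \<le> 2 * N' + 1"
    using card_int_interval[OF assms(2), of 0] by (auto simp: S_def)
  have sub: "ibox (insert i I) N' \<subseteq> (\<lambda>(g, v). g(i := v)) ` (ibox I N' \<times> S)"
  proof
    fix n assume n: "n \<in> ibox (insert i I) N'"
    have "n(i := 0) \<in> ibox I N'" and "n i \<in> S" using n insert.hyps by (auto simp: ibox_def S_def)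
    then show "n \<in> (\<lambda>(g, v). g(i := v)) ` (ibox I N' \<times> S)"
      by (intro image_eqI[of _ _ "(n(i := 0), n i)"]) auto
  qed
  have fin: "finite (ibox I N' \<times> S)" using insert.IH S by simp
  have "card (ibox (insert i I) N') \<le> card ((\<lambda>(g, v). g(i := v)) ` (ibox I N' \<times> S))"
    by (rule card_mono[OF _ sub]) (use fin in simp)
  also have "\<dots> \<le> card (ibox I N' \<times> S)" by (rule card_image_le[OF fin])
  finally have "real (card (ibox (insert i I) N')) \<le> real (card (ibox I N')) * real (card S)"
    by (simp only: card_cartesian_product of_nat_le_iff flip: of_nat_mult)
  also have "\<dots> \<le> (2 * N' + 1) ^ card I * (2 * N' + 1)"
    using insert.IH S by (intro mult_mono) auto
  also have "\<dots> = (2 * N' + 1) ^ card (insert i I)" using insert.hyps by simp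
  finally show ?case using finite_subset[OF sub] fin by auto
qed

lemma card_le_card_image_mult:
  assumes "finite A" "\<And>z. z \<in> g ` A \<Longrightarrow> real (card {a\<in>A. g a = z}) \<le> M"
  shows "real (card A) \<le> real (card (g ` A)) * M"
proof -
  have "A = (\<Union>z\<in>g ` A. {a\<in>A. g a = z})" by auto
  then have "card A = card (\<Union>z\<in>g ` A. {a\<in>A. g a = z})" by simp
  also have "\<dots> \<le> (\<Sum>z\<in>g ` A. card {a\<in>A. g a = z})" by (rule card_UN_le) (use assms in simp)
  finally have "real (card A) \<le> (\<Sum>z\<in>g ` A. real (card {a\<in>A. g a = z}))"
    by (simp only: of_nat_le_iff flip: of_nat_sum)
  also have "\<dots> \<le> (\<Sum>z\<in>g ` A. M)" by (intro sum_mono assms(2))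
  finally show ?thesis by simp
qed

definition rows_robust :: "real \<Rightarrow> nat set \<Rightarrow> nat set \<Rightarrow> (nat \<Rightarrow> nat \<Rightarrow> real) \<Rightarrow> bool" where
  "rows_robust c R I L \<longleftrightarrow>
     (\<forall>y t. t \<ge> 0 \<longrightarrow> (\<forall>k\<in>I. \<bar>\<Sum>i\<in>R. y i * L i k\<bar> \<le> t) \<longrightarrow> (\<forall>i\<in>R. c * \<bar>y i\<bar> \<le> t))"

lemma rows_robustD:
  "rows_robust c R I L \<Longrightarrow> t \<ge> 0 \<Longrightarrow> (\<And>k. k \<in> I \<Longrightarrow> \<bar>\<Sum>i\<in>R. y i * L i k\<bar> \<le> t) \<Longrightarrow> i \<in> R
    \<Longrightarrow> c * \<bar>y i\<bar> \<le> t"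
  unfolding rows_robust_def by blast

lemma mrank_less_if_rows_dependent:
  assumes i0: "i0 < m" "y i0 \<noteq> 0" and dep: "\<And>k. (\<Sum>i<m. y i * M i k) = 0"
  shows "mrank m h M < m"
proof -
  define J where "J = {..<m} - {i0}"
  have "card S < m" if S: "S \<subseteq> {..<h}" "lin_indep_cols m M S" for S
  proof -
    have "matrix_injective J S M"
      unfolding matrix_injective_def
    proof (intro allI impI)
      fix a assume hJ: "\<forall>j\<in>J. (\<Sum>k\<in>S. M j k * a k) = 0"
      have "(\<Sum>k\<in>S. a k * M i k) = 0" if i: "i < m" for i
      proof (cases "i = i0")
        case True
        have "y i0 * M i0 k = - (\<Sum>j\<in>J. y j * M j k)" for k
          using dep[of k] i0 by (simp add: J_def sum.remove)
        then have "y i0 * (\<Sum>k\<in>S. a k * M i0 k) = - (\<Sum>j\<in>J. y j * (\<Sum>k\<in>S. M j k * a k))"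
          by (simp add: sum_distrib_left sum_negf algebra_simps sum.swap[of _ S J])
        then show ?thesis using True i0 hJ by simp
      qed (use hJ i in \<open>simp add: J_def mult.commute\<close>)
      then show "\<forall>k\<in>S. a k = 0" using S(2) unfolding lin_indep_cols_def by blast
    qed
    then have "card S \<le> card J"
      using S(1) finite_subset by (intro matrix_injective_card_le) (auto simp: J_def)
    then show ?thesis using i0 by (simp add: J_def)
  qed
  moreover have "finite {card S | S. S \<subseteq> {..<h} \<and> lin_indep_cols m M S}"
    by (rule finite_subset[of _ "card ` Pow {..<h}"]) auto
  moreover have "{card S | S. S \<subseteq> {..<h} \<and> lin_indep_cols m M S} \<noteq> {}"
    unfolding lin_indep_cols_def by auto
  ultimately show ?thesis unfolding mrank_def by auto
qed

text \<open>Distance at least \<open>c\<close> from the matrices of rank below \<open>m\<close> means that every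
  combination of the rows of \<open>L\<close> has size comparable to its largest coefficient: subtracting
  the combination from one row would otherwise give a nearby singular matrix.\<close>

lemma L_ok_rows_robust:
  assumes L: "L_ok m h c C L" and c: "c > 0"
  shows "rows_robust c {..<m} {..<h} L"
  unfolding rows_robust_def
proof (intro allI impI ballI)
  fix y t i assume t: "t \<ge> 0" and h: "\<forall>k\<in>{..<h}. \<bar>\<Sum>i\<in>{..<m}. y i * L i k\<bar> \<le> t"
    and i: "i \<in> {..<m}"
  define s where "s = Max ((\<lambda>i. \<bar>y i\<bar>) ` {..<m})"
  have "s \<in> (\<lambda>i. \<bar>y i\<bar>) ` {..<m}" unfolding s_def using i by (intro Max_in) auto
  then obtain i0 where i0: "i0 < m" "\<bar>y i0\<bar> = s" by auto
  have yi: "\<bar>y i\<bar> \<le> s" unfolding s_def using i by (intro Max_ge) auto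
  show "c * \<bar>y i\<bar> \<le> t"
  proof (cases "s = 0")
    case False
    then have y0: "y i0 \<noteq> 0" and s: "s > 0" using i0 yi by auto
    define w where "w k = (\<Sum>i<m. y i * L i k)" for k
    define M where "M i k = L i k - (if i = i0 then w k / y i0 else 0)" for i k
    have dep: "(\<Sum>i<m. y i * M i k) = 0" for k
    proof -
      have "y i * M i k = y i * L i k - (if i = i0 then y i * (w k / y i0) else 0)" for i
        unfolding M_def by (simp add: right_diff_distrib)
      then have "(\<Sum>i<m. y i * M i k) = w k - (\<Sum>i<m. if i = i0 then y i * (w k / y i0) else 0)"
        by (simp add: sum_subtractf w_def)
      then show ?thesis using i0 y0 by simp
    qed
    then have "M \<in> Vrank m h"
      using mrank_less_if_rows_dependent[of i0 m y M h] i0(1) y0 dep by (simp add: Vrank_def)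
    then have "c \<le> mdist m h L M" using L by (simp add: L_ok_def)
    also have "mdist m h L M \<le> t / s"
      unfolding mdist_def
    proof (intro Max.boundedI)
      fix a assume "a \<in> insert 0 ((\<lambda>(i, k). \<bar>L i k - M i k\<bar>) ` ({..<m} \<times> {..<h}))"
      then consider "a = 0" | i k where "i < m" "k < h" "a = \<bar>L i k - M i k\<bar>" by auto
      then show "a \<le> t / s"
      proof cases
        case (2 i k)
        have "\<bar>w k\<bar> / s \<le> t / s" using h 2 s by (intro divide_right_mono) (auto simp: w_def)
        then show ?thesis using 2 i0 t s by (auto simp: M_def abs_divide)
      qed (use t s in simp)
    qed auto
    finally have "c * s \<le> t" using s by (simp add: field_simps)
    then show ?thesis using yi c by (meson mult_left_mono order_trans less_imp_le)
  qed (use yi t in simp)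
qed

definition row_reduce :: "nat \<Rightarrow> nat \<Rightarrow> (nat \<Rightarrow> nat \<Rightarrow> real) \<Rightarrow> nat \<Rightarrow> nat \<Rightarrow> real" where
  "row_reduce i1 k1 L i k = L i k - L i k1 / L i1 k1 * L i1 k"

lemma sum_row_reduce:
  assumes "finite I" "k1 \<in> I" "L i1 k1 \<noteq> 0"
  shows "(\<Sum>k\<in>I-{k1}. row_reduce i1 k1 L i k * x k)
       = (\<Sum>k\<in>I. L i k * x k) - L i k1 / L i1 k1 * (\<Sum>k\<in>I. L i1 k * x k)"
proof -
  have a: "(\<Sum>k\<in>I. L i k * x k) = L i k1 * x k1 + (\<Sum>k\<in>I-{k1}. L i k * x k)"
    and b: "(\<Sum>k\<in>I. L i1 k * x k) = L i1 k1 * x k1 + (\<Sum>k\<in>I-{k1}. L i1 k * x k)"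
    using assms by (simp_all add: sum.remove)
  show ?thesis unfolding a b row_reduce_def
    using assms(3) by (simp add: algebra_simps sum_subtractf sum_distrib_left)
qed

lemma rows_robust_pivot:
  assumes rob: "rows_robust c R I L" and "finite R" "finite I" "i1 \<in> R" "c > 0"
  obtains k1 where "k1 \<in> I" "c \<le> \<bar>L i1 k1\<bar>"
proof -
  define t where "t = Max (insert 0 ((\<lambda>k. \<bar>L i1 k\<bar>) ` I))"
  have t: "t \<ge> 0" "\<And>k. k \<in> I \<Longrightarrow> \<bar>L i1 k\<bar> \<le> t" unfolding t_def using assms by auto
  have "(\<Sum>i\<in>R. (if i = i1 then 1 else 0) * L i k) = (\<Sum>i\<in>R. if i = i1 then L i k else 0)" for k
    by (rule sum.cong) auto
  then have "(\<Sum>i\<in>R. (if i = i1 then 1 else 0) * L i k) = L i1 k" for k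
    using assms by simp
  then have "c * \<bar>(if i1 = i1 then 1 else 0 :: real)\<bar> \<le> t"
    using t by (intro rows_robustD[OF rob _ _ assms(4)]) auto
  then have "c \<le> t" by simp
  then have "t \<noteq> 0" using assms by auto
  then have "t \<in> (\<lambda>k. \<bar>L i1 k\<bar>) ` I"
    using Max_in[of "insert 0 ((\<lambda>k. \<bar>L i1 k\<bar>) ` I)"] assms by (auto simp: t_def)
  then show ?thesis using that \<open>c \<le> t\<close> by blast
qed

lemma rows_robust_row_reduce:
  assumes rob: "rows_robust c R I L" and fin: "finite R" "finite I"
    and piv: "i1 \<in> R" "k1 \<in> I" "L i1 k1 \<noteq> 0"
  shows "rows_robust c (R - {i1}) (I - {k1}) (row_reduce i1 k1 L)"
  unfolding rows_robust_def
proof (intro allI impI ballI)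
  fix y' t i assume t: "t \<ge> 0" and h: "\<forall>k\<in>I - {k1}. \<bar>\<Sum>i\<in>R - {i1}. y' i * row_reduce i1 k1 L i k\<bar> \<le> t"
    and i: "i \<in> R - {i1}"
  define y where "y = y'(i1 := - (\<Sum>i\<in>R-{i1}. y' i * L i k1) / L i1 k1)"
  have same: "(\<Sum>i\<in>R-{i1}. y i * B i) = (\<Sum>i\<in>R-{i1}. y' i * B i)" for B
    unfolding y_def by (intro sum.cong) auto
  have combined: "(\<Sum>i\<in>R. y i * L i k) = (\<Sum>i\<in>R-{i1}. y' i * row_reduce i1 k1 L i k)" for k
  proof -
    have "(\<Sum>i\<in>R. y i * L i k) = y i1 * L i1 k + (\<Sum>i\<in>R-{i1}. y' i * L i k)"
      using sum.remove[OF fin(1) piv(1), of "\<lambda>i. y i * L i k"] same[of "\<lambda>i. L i k"] by simp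
    then show ?thesis unfolding y_def row_reduce_def using piv(3)
      by (simp add: algebra_simps sum_subtractf sum_distrib_left sum_distrib_right sum_divide_distrib)
  qed
  have "\<bar>\<Sum>i\<in>R. y i * L i k\<bar> \<le> t" if k: "k \<in> I" for k
  proof (cases "k = k1")
    case True
    then show ?thesis using t piv(3) by (simp add: combined row_reduce_def)
  qed (use h k combined in auto)
  then have "c * \<bar>y i\<bar> \<le> t" using i by (intro rows_robustD[OF rob t]) auto
  then show "c * \<bar>y' i\<bar> \<le> t" using i by (simp add: y_def)
qed

lemma row_reduce_bounded:
  assumes LC: "\<forall>i\<in>R. \<forall>k\<in>I. \<bar>L i k\<bar> \<le> C" and piv: "i1 \<in> R" "k1 \<in> I" "c \<le> \<bar>L i1 k1\<bar>" "0 < c"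
    and ik: "i \<in> R" "k \<in> I"
  shows "\<bar>row_reduce i1 k1 L i k\<bar> \<le> \<bar>C\<bar> + \<bar>C\<bar> * \<bar>C\<bar> / c"
proof -
  have a: "\<bar>L i k\<bar> \<le> \<bar>C\<bar>" "\<bar>L i k1\<bar> \<le> \<bar>C\<bar>" "\<bar>L i1 k\<bar> \<le> \<bar>C\<bar>"
    using LC piv ik by (meson abs_ge_self order_trans)+
  have "\<bar>L i k1 / L i1 k1\<bar> \<le> \<bar>C\<bar> / c"
    unfolding abs_divide using a(2) piv by (intro frac_le) auto
  then have "\<bar>L i k1 / L i1 k1 * L i1 k\<bar> \<le> \<bar>C\<bar> / c * \<bar>C\<bar>"
    unfolding abs_mult using a(3) piv by (intro mult_mono) auto
  moreover have "\<bar>C\<bar> / c * \<bar>C\<bar> = \<bar>C\<bar> * \<bar>C\<bar> / c" by simp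
  ultimately show ?thesis unfolding row_reduce_def
    using a(1) abs_triangle_ineq4[of "L i k" "L i k1 / L i1 k1 * L i1 k"] by linarith
qed

definition near_kernel :: "nat set \<Rightarrow> nat set \<Rightarrow> (nat \<Rightarrow> nat \<Rightarrow> real) \<Rightarrow> real \<Rightarrow> real \<Rightarrow> (nat \<Rightarrow> int) set" where
  "near_kernel R I L N' e = {n \<in> ibox I N'. \<forall>i\<in>R. \<bar>\<Sum>k\<in>I. L i k * real_of_int (n k)\<bar> \<le> e}"

lemma finite_near_kernel: "finite I \<Longrightarrow> 0 \<le> N' \<Longrightarrow> finite (near_kernel R I L N' e)"
  using finite_card_ibox[of I N'] by (simp add: near_kernel_def)

lemma forget_pivot_near_kernel:
  assumes I: "finite I" and piv: "i1 \<in> R" "k1 \<in> I" "c \<le> \<bar>L i1 k1\<bar>" "0 < c"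
    and LC: "\<forall>i\<in>R. \<forall>k\<in>I. \<bar>L i k\<bar> \<le> C"
  shows "(\<lambda>n. n(k1 := 0)) ` near_kernel R I L N' e
    \<subseteq> near_kernel (R - {i1}) (I - {k1}) (row_reduce i1 k1 L) N' (e + \<bar>C\<bar> / c * e)"
proof
  fix z assume "z \<in> (\<lambda>n. n(k1 := 0)) ` near_kernel R I L N' e"
  then obtain n where n: "n \<in> near_kernel R I L N' e" and z: "z = n(k1 := 0)" by blast
  have "\<bar>\<Sum>k\<in>I-{k1}. row_reduce i1 k1 L i k * real_of_int (z k)\<bar> \<le> e + \<bar>C\<bar> / c * e"
    if i: "i \<in> R - {i1}" for i
  proof -
    have s: "\<bar>\<Sum>k\<in>I. L i k * real_of_int (n k)\<bar> \<le> e" "\<bar>\<Sum>k\<in>I. L i1 k * real_of_int (n k)\<bar> \<le> e"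
      using n i piv by (auto simp: near_kernel_def)
    have "\<bar>L i k1 / L i1 k1\<bar> \<le> \<bar>C\<bar> / c"
      unfolding abs_divide using LC i piv by (intro frac_le) (auto intro: order_trans[OF _ abs_ge_self])
    then have "\<bar>L i k1 / L i1 k1 * (\<Sum>k\<in>I. L i1 k * real_of_int (n k))\<bar> \<le> \<bar>C\<bar> / c * e"
      unfolding abs_mult using s(2) piv by (intro mult_mono) auto
    have "(\<Sum>k\<in>I-{k1}. row_reduce i1 k1 L i k * real_of_int (z k))
        = (\<Sum>k\<in>I-{k1}. row_reduce i1 k1 L i k * real_of_int (n k))"
      unfolding z by (intro sum.cong) auto
    also have "\<dots> = (\<Sum>k\<in>I. L i k * real_of_int (n k))
        - L i k1 / L i1 k1 * (\<Sum>k\<in>I. L i1 k * real_of_int (n k))"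
      using piv by (intro sum_row_reduce[OF I piv(2)]) auto
    finally show ?thesis
      using abs_triangle_ineq4[of "\<Sum>k\<in>I. L i k * real_of_int (n k)"] s(1) \<open>\<bar>L i k1 / L i1 k1 * _\<bar> \<le> _\<close>
      by linarith
  qed
  moreover have "z \<in> ibox (I - {k1}) N'" using n unfolding z near_kernel_def ibox_def by auto
  ultimately show "z \<in> near_kernel (R - {i1}) (I - {k1}) (row_reduce i1 k1 L) N' (e + \<bar>C\<bar> / c * e)"
    by (simp add: near_kernel_def)
qed

text \<open>A fibre of the map forgetting the pivot coordinate lies on a line crossing the slab
  \<open>\<bar>\<Sum>k\<in>I. L i1 k * n k\<bar> \<le> e\<close> of width \<open>2 e / \<bar>L i1 k1\<bar>\<close>.\<close>

lemma card_fibre_forget_pivot: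
  assumes I: "finite I" and piv: "i1 \<in> R" "k1 \<in> I" "c \<le> \<bar>L i1 k1\<bar>" "0 < c" and e: "0 \<le> e"
  shows "real (card {n \<in> near_kernel R I L N' e. n(k1 := 0) = z}) \<le> 2 * e / c + 1"
proof -
  define S where "S = {v::int. \<bar>L i1 k1 * real_of_int v + (\<Sum>k\<in>I-{k1}. L i1 k * real_of_int (z k))\<bar> \<le> e}"
  have "inj_on (\<lambda>n. n k1) {n \<in> near_kernel R I L N' e. n(k1 := 0) = z}"
  proof (rule inj_onI)
    fix a b assume "a \<in> {n \<in> near_kernel R I L N' e. n(k1 := 0) = z}"
      "b \<in> {n \<in> near_kernel R I L N' e. n(k1 := 0) = z}" "a k1 = b k1"
    moreover have "a = (a(k1 := 0))(k1 := a k1)" "b = (b(k1 := 0))(k1 := b k1)" by auto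
    ultimately show "a = b" by auto
  qed
  moreover have "(\<lambda>n. n k1) ` {n \<in> near_kernel R I L N' e. n(k1 := 0) = z} \<subseteq> S"
  proof
    fix v assume "v \<in> (\<lambda>n. n k1) ` {n \<in> near_kernel R I L N' e. n(k1 := 0) = z}"
    then obtain n where n: "n \<in> near_kernel R I L N' e" "n(k1 := 0) = z" and v: "v = n k1" by blast
    have "(\<Sum>k\<in>I-{k1}. L i1 k * real_of_int (z k)) = (\<Sum>k\<in>I-{k1}. L i1 k * real_of_int (n k))"
      unfolding n(2)[symmetric] by (intro sum.cong) auto
    then have "(\<Sum>k\<in>I. L i1 k * real_of_int (n k))
        = L i1 k1 * real_of_int v + (\<Sum>k\<in>I-{k1}. L i1 k * real_of_int (z k))"
      using sum.remove[OF I piv(2), of "\<lambda>k. L i1 k * real_of_int (n k)"] v by simp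
    then show "v \<in> S" using n piv by (auto simp: near_kernel_def S_def)
  qed
  ultimately have "card {n \<in> near_kernel R I L N' e. n(k1 := 0) = z} \<le> card S"
    using card_mono[OF card_int_slab(1)[OF piv(3,4) e]] by (simp add: S_def card_image[symmetric])
  then show ?thesis using card_int_slab(2)[OF piv(3,4) e, of "\<Sum>k\<in>I-{k1}. L i1 k * real_of_int (z k)"]
    unfolding S_def by linarith
qed

lemma card_near_kernel_row_reduce:
  assumes I: "finite I" and piv: "i1 \<in> R" "k1 \<in> I" "c \<le> \<bar>L i1 k1\<bar>" "0 < c"
    and e: "0 \<le> e" and N': "0 \<le> N'" and LC: "\<forall>i\<in>R. \<forall>k\<in>I. \<bar>L i k\<bar> \<le> C"
  shows "real (card (near_kernel R I L N' e))
    \<le> real (card (near_kernel (R - {i1}) (I - {k1}) (row_reduce i1 k1 L) N' (e + \<bar>C\<bar> / c * e)))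
      * (2 * e / c + 1)"
proof -
  have "real (card (near_kernel R I L N' e))
      \<le> real (card ((\<lambda>n. n(k1 := 0)) ` near_kernel R I L N' e)) * (2 * e / c + 1)"
    using finite_near_kernel[OF I N'] card_fibre_forget_pivot[where L = L, OF I piv e]
    by (rule card_le_card_image_mult)
  also have "\<dots> \<le> real (card (near_kernel (R - {i1}) (I - {k1}) (row_reduce i1 k1 L) N' (e + \<bar>C\<bar> / c * e)))
      * (2 * e / c + 1)"
    using card_mono[OF finite_near_kernel forget_pivot_near_kernel[OF I piv LC]] I N' e piv
    by (intro mult_right_mono) auto
  finally show ?thesis .
qed

lemma lattice_count_near_rows:
  assumes "c > 0" "e \<ge> 0"
  shows "\<exists>B\<ge>0. \<forall>R I L N'. finite R \<and> finite I \<and> card R = r \<and> N' \<ge> 0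
      \<and> (\<forall>i\<in>R. \<forall>k\<in>I. \<bar>L i k\<bar> \<le> C) \<and> rows_robust c R I L \<longrightarrow>
      real (card (near_kernel R I L N' e)) \<le> B * (2 * N' + 1) ^ (card I - card R)"
  using assms(2)
proof (induction r arbitrary: C e)
  case 0
  show ?case
  proof (intro exI[of _ 1] conjI allI impI)
    fix R I L and N' :: real assume "finite R \<and> finite I \<and> card R = 0 \<and> N' \<ge> 0
      \<and> (\<forall>i\<in>R. \<forall>k\<in>I. \<bar>L i k\<bar> \<le> C) \<and> rows_robust c R I L"
    then have "R = {}" "finite I" "N' \<ge> 0" by auto
    then show "real (card (near_kernel R I L N' e)) \<le> 1 * (2 * N' + 1) ^ (card I - card R)"
      using finite_card_ibox[of I N'] card_mono[of "ibox I N'" "near_kernel R I L N' e"]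
      by (force simp: near_kernel_def)
  qed simp
next
  case (Suc r)
  have e': "0 \<le> e + \<bar>C\<bar> / c * e" using Suc.prems assms(1) by simp
  then obtain B' where B': "B' \<ge> 0" and IH: "\<forall>R I L N'. finite R \<and> finite I \<and> card R = r \<and> N' \<ge> 0
      \<and> (\<forall>i\<in>R. \<forall>k\<in>I. \<bar>L i k\<bar> \<le> \<bar>C\<bar> + \<bar>C\<bar> * \<bar>C\<bar> / c) \<and> rows_robust c R I L \<longrightarrow>
      real (card (near_kernel R I L N' (e + \<bar>C\<bar> / c * e))) \<le> B' * (2 * N' + 1) ^ (card I - card R)"
    using Suc.IH[of "e + \<bar>C\<bar> / c * e" "\<bar>C\<bar> + \<bar>C\<bar> * \<bar>C\<bar> / c"] by blast
  show ?case
  proof (intro exI[of _ "B' * (2 * e / c + 1)"] conjI allI impI)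
    show "B' * (2 * e / c + 1) \<ge> 0" using B' Suc.prems assms(1) by simp
    fix R I L and N' :: real assume "finite R \<and> finite I \<and> card R = Suc r \<and> N' \<ge> 0
      \<and> (\<forall>i\<in>R. \<forall>k\<in>I. \<bar>L i k\<bar> \<le> C) \<and> rows_robust c R I L"
    then have fin: "finite R" "finite I" and R: "card R = Suc r" and N': "N' \<ge> 0"
      and LC: "\<forall>i\<in>R. \<forall>k\<in>I. \<bar>L i k\<bar> \<le> C" and rob: "rows_robust c R I L" by auto
    obtain i1 where i1: "i1 \<in> R" using R by (metis card.empty ex_in_conv nat.simps(3))
    obtain k1 where k1: "k1 \<in> I" "c \<le> \<bar>L i1 k1\<bar>"
      using rows_robust_pivot[OF rob fin i1 assms(1)] .
    have card_I: "card (I - {k1}) - card (R - {i1}) = card I - card R"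
      using fin i1 k1 R by simp
    have reduced: "real (card (near_kernel (R - {i1}) (I - {k1}) (row_reduce i1 k1 L) N' (e + \<bar>C\<bar> / c * e)))
        \<le> B' * (2 * N' + 1) ^ (card I - card R)"
      unfolding card_I[symmetric] using fin R N' i1 k1 assms(1)
        row_reduce_bounded[OF LC i1 k1 assms(1)]
        rows_robust_row_reduce[OF rob fin i1 k1(1)]
      by (intro IH[rule_format]) auto
    have "0 \<le> 2 * e / c + 1" using Suc.prems assms(1) by simp
    from mult_right_mono[OF reduced this] card_near_kernel_row_reduce[OF fin(2) i1 k1 assms(1) Suc.prems N' LC]
    show "real (card (near_kernel R I L N' e)) \<le> B' * (2 * e / c + 1) * (2 * N' + 1) ^ (card I - card R)"
      by (simp add: mult_ac)
  qed
qed

section \<open>Translations and cubes in the first \<open>h\<close> coordinates\<close>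

lemma product_sigma_finite_lborel: "product_sigma_finite (\<lambda>_::nat. lborel :: real measure)"
  unfolding product_sigma_finite_def using sigma_finite_lborel by simp

lemma measurable_translate_PiM_lborel:
  "(\<lambda>x. \<lambda>k\<in>I. x k + a k) \<in> measurable (PiM I (\<lambda>_. lborel)) (PiM I (\<lambda>_. lborel :: real measure))"
  by (intro measurable_restrict)
    (auto intro!: measurable_component_singleton simp: measurable_cong_sets[OF refl sets_lborel])

lemma distr_translate_PiM_lborel:
  fixes a :: "nat \<Rightarrow> real"
  assumes fI: "finite I"
  shows "distr (PiM I (\<lambda>_. lborel)) (PiM I (\<lambda>_. lborel)) (\<lambda>x. \<lambda>k\<in>I. x k + a k) = PiM I (\<lambda>_. lborel)"
proof (rule product_sigma_finite.PiM_eqI[OF product_sigma_finite_lborel fI])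
  fix A :: "nat \<Rightarrow> real set" assume A: "\<And>i. i \<in> I \<Longrightarrow> A i \<in> sets lborel"
  have pre: "(\<lambda>x. \<lambda>k\<in>I. x k + a k) -` Pi\<^sub>E I A \<inter> space (PiM I (\<lambda>_. lborel))
      = Pi\<^sub>E I (\<lambda>i. (\<lambda>t. t + a i) -` A i)"
    by (auto simp: space_PiM PiE_iff)
  have sets: "(\<lambda>t. t + a i) -` A i \<in> sets lborel" if "i \<in> I" for i
    using measurable_sets[OF _ A[OF that], of "\<lambda>t. t + a i" lborel] by simp
  have shift: "emeasure lborel ((\<lambda>t. t + a i) -` A i) = emeasure lborel (A i)" if "i \<in> I" for i
  proof -
    have "emeasure lborel (A i) = emeasure (distr lborel borel ((+) (a i))) (A i)"
      by (simp add: lborel_distr_plus)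
    also have "\<dots> = emeasure lborel ((+) (a i) -` A i \<inter> space lborel)"
      using A[OF that] by (intro emeasure_distr) auto
    also have "(+) (a i) -` A i \<inter> space lborel = (\<lambda>t. t + a i) -` A i" by (auto simp: add.commute)
    finally show ?thesis by simp
  qed
  have "emeasure (distr (PiM I (\<lambda>_. lborel)) (PiM I (\<lambda>_. lborel)) (\<lambda>x. \<lambda>k\<in>I. x k + a k)) (Pi\<^sub>E I A)
      = emeasure (PiM I (\<lambda>_. lborel)) ((\<lambda>x. \<lambda>k\<in>I. x k + a k) -` Pi\<^sub>E I A \<inter> space (PiM I (\<lambda>_. lborel)))"
    using A fI by (intro emeasure_distr measurable_translate_PiM_lborel sets_PiM_I_finite) auto
  also have "\<dots> = (\<Prod>i\<in>I. emeasure lborel ((\<lambda>t. t + a i) -` A i))"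
    unfolding pre by (rule product_sigma_finite.emeasure_PiM[OF product_sigma_finite_lborel fI sets])
  also have "\<dots> = (\<Prod>i\<in>I. emeasure lborel (A i))" using shift by simp
  finally show "emeasure (distr (PiM I (\<lambda>_. lborel)) (PiM I (\<lambda>_. lborel)) (\<lambda>x. \<lambda>k\<in>I. x k + a k)) (Pi\<^sub>E I A)
      = (\<Prod>i\<in>I. emeasure lborel (A i))" .
qed simp

lemma integral_translate_PiM_lborel:
  fixes a :: "nat \<Rightarrow> real" and f :: "(nat \<Rightarrow> real) \<Rightarrow> real"
  assumes "finite I" and f: "f \<in> borel_measurable (PiM I (\<lambda>_. lborel))"
  shows "(\<integral>x. f (\<lambda>k\<in>I. x k + a k) \<partial>PiM I (\<lambda>_. lborel)) = (\<integral>x. f x \<partial>PiM I (\<lambda>_. lborel))"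
  using integral_distr[OF measurable_translate_PiM_lborel f, of a]
  by (simp add: distr_translate_PiM_lborel[OF assms(1)])

definition cube :: "nat \<Rightarrow> (nat \<Rightarrow> real) \<Rightarrow> real \<Rightarrow> (nat \<Rightarrow> real) set" where
  "cube h v a = Pi\<^sub>E {..<h} (\<lambda>k. {v k - a..v k + a})"

lemma mem_cube:
  assumes "x \<in> space (lborel_pi h)"
  shows "x \<in> cube h v a \<longleftrightarrow> (\<forall>k<h. \<bar>x k - v k\<bar> \<le> a)"
proof -
  have "x k \<in> {v k - a..v k + a} \<longleftrightarrow> \<bar>x k - v k\<bar> \<le> a" for k by (auto simp: abs_le_iff)
  then show ?thesis using assms by (simp add: cube_def space_PiM PiE_iff lessThan_iff Ball_def)
qed

lemma sets_cube: "cube h v a \<in> sets (lborel_pi h)"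
  unfolding cube_def by (intro sets_PiM_I_finite) auto

lemma emeasure_cube:
  assumes "0 \<le> a"
  shows "emeasure (lborel_pi h) (cube h v a) = ennreal ((2 * a) ^ h)"
proof -
  have "emeasure (lborel_pi h) (cube h v a) = (\<Prod>i<h. emeasure lborel {v i - a..v i + a})"
    unfolding cube_def by (rule product_sigma_finite.emeasure_PiM[OF product_sigma_finite_lborel]) auto
  also have "\<dots> = ennreal (2 * a) ^ h" using assms by simp
  finally show ?thesis using assms by (simp add: ennreal_power)
qed

lemma integral_indicator_cube:
  "0 \<le> a \<Longrightarrow> (\<integral>x. indicator (cube h v a) x \<partial>lborel_pi h) = (2 * a) ^ h"
  using emeasure_cube[of a h v] sets_cube[of h v a] by (simp add: measure_def)

lemma integrable_indicator_cube: "0 \<le> a \<Longrightarrow> integrable (lborel_pi h) (indicator (cube h v a) :: _ \<Rightarrow> real)"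
  using emeasure_cube[of a h v] sets_cube[of h v a] by (intro integrable_real_indicator) auto

lemma integrable_bounded_by_cube:
  fixes g :: "(nat \<Rightarrow> real) \<Rightarrow> real"
  assumes g: "g \<in> borel_measurable (lborel_pi h)" and a: "0 \<le> a"
    and bd: "\<And>x. x \<in> space (lborel_pi h) \<Longrightarrow> \<bar>g x\<bar> \<le> indicator (cube h v a) x"
  shows "integrable (lborel_pi h) g"
proof (rule Bochner_Integration.integrable_bound[OF integrable_indicator_cube[OF a] g])
  show "AE x in lborel_pi h. norm (g x) \<le> norm (indicator (cube h v a) x :: real)"
    using bd by (intro AE_I2) simp
qed

section \<open>The smoothing kernel\<close>

lemma conv_eq_single_term:
  assumes "\<And>a'. a' \<noteq> a \<Longrightarrow> chi (t - of_int a') = 0"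
  shows "conv N f chi t = zext N f a * chi (t - of_int a)"
proof -
  have "conv N f chi t = infsum (\<lambda>n::int. zext N f n * chi (t - of_int n)) {a}"
    unfolding conv_def by (rule infsum_cong_neutral) (use assms in auto)
  then show ?thesis by simp
qed

lemma conv_nonzero_imp:
  assumes "conv N f chi t \<noteq> 0"
  obtains a :: int where "chi (t - of_int a) \<noteq> 0"
proof -
  have "\<exists>a::int. chi (t - of_int a) \<noteq> 0"
  proof (rule ccontr)
    assume "\<not> ?thesis"
    then have "conv N f chi t = 0" unfolding conv_def by (intro infsum_0) auto
    then show False using assms by simp
  qed
  then show ?thesis using that by blast
qed

definition xi :: "nat \<Rightarrow> (nat \<Rightarrow> nat \<Rightarrow> int) \<Rightarrow> nat \<Rightarrow> (nat \<Rightarrow> real) \<Rightarrow> real" where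
  "xi h \<Xi> j y = (\<Sum>k<h. real_of_int (\<Xi> j k) * y k)"

lemma xi_diff: "xi h \<Xi> j (\<lambda>k. x k - y k) = xi h \<Xi> j x - xi h \<Xi> j y"
  unfolding xi_def by (simp add: right_diff_distrib sum_subtractf)

lemma xi_of_int: "xi h \<Xi> j (\<lambda>k. real_of_int (n k)) = real_of_int (\<Sum>k<h. \<Xi> j k * n k)"
  unfolding xi_def by simp

lemma xi_eq_sum_realmat: "xi h \<Xi> j y = (\<Sum>k\<in>{..<h}. realmat \<Xi> j k * y k)"
  by (simp add: xi_def realmat_def)

lemma measurable_xi: "(\<lambda>x. xi h \<Xi> j x) \<in> borel_measurable (lborel_pi h)"
  unfolding xi_def
  by (intro borel_measurable_sum borel_measurable_times borel_measurable_const)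
     (auto intro!: measurable_component_singleton simp: measurable_cong_sets[OF refl sets_lborel])

definition int_vecs :: "nat \<Rightarrow> (nat \<Rightarrow> int) set" where
  "int_vecs h = {n. \<forall>k\<ge>h. n k = 0}"

lemma Xi_ok_int_matrix_bounded:
  "Xi_ok d h C \<Xi> \<Longrightarrow> C \<le> C' \<Longrightarrow> int_matrix_bounded C' {..<d} {..<h} (realmat \<Xi>)"
  by (force simp: Xi_ok_def int_matrix_bounded_def realmat_def)

lemma Xi_ok_matrix_injective:
  assumes Xi: "Xi_ok d h C \<Xi>"
  shows "matrix_injective {..<d} {..<h} (realmat \<Xi>)"
  unfolding matrix_injective_def
proof (intro allI impI ballI)
  fix x k assume hx: "\<forall>j\<in>{..<d}. (\<Sum>k\<in>{..<h}. realmat \<Xi> j k * x k) = 0" and k: "k \<in> {..<h}"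
  define x' where "x' k = (if k < h then x k else 0)" for k
  have "mv d h (realmat \<Xi>) x' = mv d h (realmat \<Xi>) (\<lambda>_. 0)"
  proof
    fix i
    have "(\<Sum>k<h. realmat \<Xi> i k * x' k) = (\<Sum>k<h. realmat \<Xi> i k * x k)" by (simp add: x'_def)
    then show "mv d h (realmat \<Xi>) x' i = mv d h (realmat \<Xi>) (\<lambda>_. 0) i" using hx by (simp add: mv_def)
  qed
  moreover have "x' \<in> vecs h" "(\<lambda>_. 0) \<in> vecs h" by (simp_all add: vecs_def x'_def)
  ultimately have "x' = (\<lambda>_. 0)" using Xi unfolding Xi_ok_def inj_on_def by blast
  then show "x k = 0" using k by (metis x'_def lessThan_iff)
qed

text \<open>This is where the hypothesis \<open>\<Xi>(\<int>\<^sup>h) = \<int>\<^sup>d \<inter> im \<Xi>\<close> is used.\<close>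

lemma Xi_ok_lattice_preimage:
  assumes Xi: "Xi_ok d h C \<Xi>" and z: "\<forall>j<d. xi h \<Xi> j z = b j" and b: "\<forall>j<d. b j \<in> \<int>"
  obtains n where "n \<in> int_vecs h" "\<forall>j<d. xi h \<Xi> j (\<lambda>k. real_of_int (n k)) = b j"
proof -
  define z' where "z' k = (if k < h then z k else 0)" for k
  have z'v: "z' \<in> vecs h" by (simp add: vecs_def z'_def)
  have mvz: "mv d h (realmat \<Xi>) z' = (\<lambda>i. if i < d then b i else 0)"
    using z by (auto simp: mv_def z'_def xi_eq_sum_realmat)
  have "mv d h (realmat \<Xi>) z' \<in> ivecs d" using b by (auto simp: mvz ivecs_def vecs_def)
  then have "mv d h (realmat \<Xi>) z' \<in> ivecs d \<inter> mv d h (realmat \<Xi>) ` vecs h" using z'v by blast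
  then have "mv d h (realmat \<Xi>) z' \<in> mv d h (realmat \<Xi>) ` ivecs h"
    using Xi by (simp add: Xi_ok_def)
  then obtain w where w: "w \<in> ivecs h" "mv d h (realmat \<Xi>) w = mv d h (realmat \<Xi>) z'"
    by (metis imageE)
  define n where "n k = \<lfloor>w k\<rfloor>" for k
  have wn: "real_of_int (n k) = w k" for k
  proof (cases "k < h")
    case True then have "w k \<in> \<int>" using w(1) by (simp add: ivecs_def)
    then show ?thesis by (simp add: n_def)
  next
    case False then show ?thesis using w(1) by (simp add: ivecs_def vecs_def n_def)
  qed
  have "n \<in> int_vecs h" using w(1) by (simp add: int_vecs_def n_def ivecs_def vecs_def)
  moreover have "xi h \<Xi> j (\<lambda>k. real_of_int (n k)) = b j" if j: "j < d" for j
  proof -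
    have "xi h \<Xi> j (\<lambda>k. real_of_int (n k)) = mv d h (realmat \<Xi>) w j"
      using j by (simp add: xi_eq_sum_realmat mv_def wn)
    also have "\<dots> = b j" using w(2) mvz j by simp
    finally show ?thesis .
  qed
  ultimately show ?thesis using that by blast
qed

text \<open>Of the smallness conditions on \<open>\<eta>\<close>, \<open>\<eta> \<le> 1/4\<close> separates the translates of the kernel by
  distinct lattice points, \<open>\<eta> \<le> \<delta>\<close> lifts near-integer points of the range of \<open>\<Xi>\<close> to lattice
  points, and \<open>K1 * \<eta> \<le> 1\<close> confines the kernel to a unit cube.\<close>

locale smoothing_kernel =
  fixes d h :: nat and \<Xi> :: "nat \<Rightarrow> nat \<Rightarrow> int" and C :: real
    and chi :: "real \<Rightarrow> real" and \<eta> K1 \<delta> :: real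
  assumes Xi: "Xi_ok d h C \<Xi>"
    and Xi_inverse_bounded: "inverse_bounded K1 {..<d} {..<h} (realmat \<Xi>)"
    and Xi_near_integers: "near_integers_in_range \<delta> {..<d} {..<h} (realmat \<Xi>)"
    and chi_measurable: "chi \<in> borel_measurable borel"
    and chi_range: "\<And>x. 0 \<le> chi x \<and> chi x \<le> 1"
    and chi_supported: "eta_supported \<eta> chi"
    and eta: "0 < \<eta>" "\<eta> \<le> 1/4" "\<eta> \<le> \<delta>" "K1 * \<eta> \<le> 1"
    and K1: "K1 > 0" and C: "C > 0" and h: "h \<ge> 1"
begin

lemma xi_inverse_bound: "(\<And>j. j < d \<Longrightarrow> \<bar>xi h \<Xi> j y\<bar> \<le> t) \<Longrightarrow> k < h \<Longrightarrow> \<bar>y k\<bar> \<le> K1 * t"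
  using Xi_inverse_bounded unfolding inverse_bounded_def xi_eq_sum_realmat by auto

lemma chi_eq_0: "\<eta> < \<bar>x\<bar> \<Longrightarrow> chi x = 0"
  using chi_supported unfolding eta_supported_def by force

lemma chi_eq_1: "\<bar>x\<bar> \<le> \<eta> / 2 \<Longrightarrow> chi x = 1"
  using chi_supported unfolding eta_supported_def by blast

text \<open>The product of the smoothed \<open>f\<^sub>j\<close> along \<open>\<Xi>\<close> is a sum of translates of \<open>psi\<close> by lattice
  points (\<open>prod_conv_eq_sum_psi\<close> below).\<close>
definition psi :: "(nat \<Rightarrow> real) \<Rightarrow> real" where
  "psi y = (\<Prod>j<d. chi (xi h \<Xi> j y))"

lemma psi_nonneg: "0 \<le> psi y" and psi_le_1: "psi y \<le> 1"
  unfolding psi_def using chi_range by (auto intro: prod_nonneg prod_le_1)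

lemma psi_nonzero_xi: "psi y \<noteq> 0 \<Longrightarrow> j < d \<Longrightarrow> \<bar>xi h \<Xi> j y\<bar> \<le> \<eta>"
  unfolding psi_def using chi_eq_0 by (meson not_le prod_zero_iff finite_lessThan lessThan_iff)

lemma psi_nonzero_coord: "psi y \<noteq> 0 \<Longrightarrow> k < h \<Longrightarrow> \<bar>y k\<bar> \<le> K1 * \<eta>"
  using psi_nonzero_xi xi_inverse_bound by blast

lemma psi_shift_nonzero_xi:
  "psi (\<lambda>k. x k - v k) \<noteq> 0 \<Longrightarrow> j < d \<Longrightarrow> \<bar>xi h \<Xi> j x - xi h \<Xi> j v\<bar> \<le> \<eta>"
  using psi_nonzero_xi[of "\<lambda>k. x k - v k" j] by (simp add: xi_diff)

lemma measurable_psi_shift: "(\<lambda>x. psi (\<lambda>k. x k - v k)) \<in> borel_measurable (lborel_pi h)"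
  unfolding psi_def xi_diff
  by (intro borel_measurable_prod measurable_compose[OF _ chi_measurable] borel_measurable_diff
      measurable_xi) simp

lemma measurable_psi: "psi \<in> borel_measurable (lborel_pi h)"
  using measurable_psi_shift[of "\<lambda>_. 0"] by simp

lemma psi_shift_le_indicator:
  "x \<in> space (lborel_pi h) \<Longrightarrow> \<bar>psi (\<lambda>k. x k - v k)\<bar> \<le> indicator (cube h v (K1 * \<eta>)) x"
  using psi_nonzero_coord[of "\<lambda>k. x k - v k"] psi_nonneg psi_le_1
  by (cases "psi (\<lambda>k. x k - v k) = 0") (auto simp: mem_cube)

lemma integrable_psi_shift_mult:
  assumes "\<phi> \<in> borel_measurable (lborel_pi h)" "\<And>x. \<bar>\<phi> x\<bar> \<le> 1"
  shows "integrable (lborel_pi h) (\<lambda>x. psi (\<lambda>k. x k - v k) * \<phi> x)"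
proof (rule integrable_bounded_by_cube)
  show "0 \<le> K1 * \<eta>" using K1 eta by simp
  fix x assume x: "x \<in> space (lborel_pi h)"
  have "\<bar>psi (\<lambda>k. x k - v k) * \<phi> x\<bar> \<le> \<bar>psi (\<lambda>k. x k - v k)\<bar>"
    using assms(2)[of x] unfolding abs_mult by (simp add: mult_left_le)
  also have "\<dots> \<le> indicator (cube h v (K1 * \<eta>)) x" by (rule psi_shift_le_indicator[OF x])
  finally show "\<bar>psi (\<lambda>k. x k - v k) * \<phi> x\<bar> \<le> indicator (cube h v (K1 * \<eta>)) x" .
qed (use assms measurable_psi_shift in auto)

lemma integrable_psi_shift: "integrable (lborel_pi h) (\<lambda>x. psi (\<lambda>k. x k - v k))"
  using integrable_psi_shift_mult[of "\<lambda>_. 1"] by simp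

definition W :: real where
  "W = (\<integral>x. psi x \<partial>lborel_pi h)"

lemma integral_psi_shift: "(\<integral>x. psi (\<lambda>k. x k - v k) \<partial>lborel_pi h) = W"
proof -
  have "psi (\<lambda>k\<in>{..<h}. x k + - v k) = psi (\<lambda>k. x k - v k)" for x
    unfolding psi_def xi_def by simp
  then show ?thesis
    using integral_translate_PiM_lborel[OF _ measurable_psi, of "\<lambda>k. - v k"] by (simp add: W_def)
qed

lemma W_le: "W \<le> (2 * K1 * \<eta>) ^ h"
proof -
  have a: "0 \<le> K1 * \<eta>" using K1 eta by simp
  have "W \<le> (\<integral>x. indicator (cube h (\<lambda>_. 0) (K1 * \<eta>)) x \<partial>lborel_pi h)"
    unfolding W_def
  proof (rule integral_mono)
    show "integrable (lborel_pi h) psi" using integrable_psi_shift[of "\<lambda>_. 0"] by simp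
    show "integrable (lborel_pi h) (indicator (cube h (\<lambda>_. 0) (K1 * \<eta>)) :: _ \<Rightarrow> real)"
      by (rule integrable_indicator_cube[OF a])
    fix x assume "x \<in> space (lborel_pi h)"
    then show "psi x \<le> indicator (cube h (\<lambda>_. 0) (K1 * \<eta>)) x"
      using psi_shift_le_indicator[of x "\<lambda>_. 0"] by simp
  qed
  also have "\<dots> = (2 * (K1 * \<eta>)) ^ h" by (rule integral_indicator_cube[OF a])
  finally show ?thesis by (simp add: mult.assoc)
qed

lemma W_ge: "(\<eta> / (real h * C)) ^ h \<le> W"
proof -
  define a where "a = \<eta> / (2 * real h * C)"
  have a: "0 \<le> a" using eta C by (simp add: a_def)
  have "psi x = 1" if x: "\<forall>k<h. \<bar>x k\<bar> \<le> a" for x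
  proof -
    have "chi (xi h \<Xi> j x) = 1" if j: "j < d" for j
    proof (rule chi_eq_1)
      have "\<bar>xi h \<Xi> j x\<bar> \<le> (\<Sum>k<h. \<bar>real_of_int (\<Xi> j k)\<bar> * \<bar>x k\<bar>)"
        unfolding xi_def abs_mult[symmetric] by (rule sum_abs)
      also have "\<dots> \<le> (\<Sum>k<h. C * a)"
        using Xi j x C by (intro sum_mono mult_mono) (auto simp: Xi_ok_def)
      also have "\<dots> = \<eta> / 2" using h C by (simp add: a_def field_simps)
      finally show "\<bar>xi h \<Xi> j x\<bar> \<le> \<eta> / 2" .
    qed
    then show ?thesis unfolding psi_def by simp
  qed
  then have "indicator (cube h (\<lambda>_. 0) a) x \<le> psi x" if "x \<in> space (lborel_pi h)" for x
    using that psi_nonneg by (auto simp: mem_cube indicator_def)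
  then have "(\<integral>x. indicator (cube h (\<lambda>_. 0) a) x \<partial>lborel_pi h) \<le> W"
    unfolding W_def using integrable_indicator_cube[OF a] integrable_psi_shift[of "\<lambda>_. 0"]
    by (intro integral_mono) simp_all
  moreover have "(\<integral>x. indicator (cube h (\<lambda>_. 0) a) x \<partial>lborel_pi h) = (2 * a) ^ h"
    by (rule integral_indicator_cube[OF a])
  moreover have "2 * a = \<eta> / (real h * C)" using h C by (simp add: a_def field_simps)
  ultimately show ?thesis by simp
qed

lemma W_pos: "W > 0"
proof -
  have "0 < (\<eta> / (real h * C)) ^ h" using eta C h by simp
  then show ?thesis using W_ge by linarith
qed

end

context smoothing_kernel
begin

lemma psi_shift_unique:
  assumes n: "n \<in> int_vecs h" and n': "n' \<in> int_vecs h"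
    and nz: "psi (\<lambda>k. x k - real_of_int (n k)) \<noteq> 0" and nz': "psi (\<lambda>k. x k - real_of_int (n' k)) \<noteq> 0"
  shows "n = n'"
proof -
  have "xi h \<Xi> j (\<lambda>k. real_of_int (n k) - real_of_int (n' k)) = 0" if j: "j < d" for j
  proof -
    have "\<bar>xi h \<Xi> j (\<lambda>k. real_of_int (n k)) - xi h \<Xi> j (\<lambda>k. real_of_int (n' k))\<bar> \<le> 2 * \<eta>"
      using psi_shift_nonzero_xi[OF nz j] psi_shift_nonzero_xi[OF nz' j] by linarith
    then have "\<bar>real_of_int ((\<Sum>k<h. \<Xi> j k * n k) - (\<Sum>k<h. \<Xi> j k * n' k))\<bar> < 1"
      using eta unfolding xi_of_int by simp
    then have "(\<Sum>k<h. \<Xi> j k * n k) = (\<Sum>k<h. \<Xi> j k * n' k)" by linarith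
    then show ?thesis unfolding xi_diff xi_of_int by simp
  qed
  then have "\<bar>real_of_int (n k) - real_of_int (n' k)\<bar> \<le> K1 * 0" if "k < h" for k
    using that by (intro xi_inverse_bound) auto
  then have "n k = n' k" for k using n n' by (cases "k < h") (auto simp: int_vecs_def)
  then show ?thesis by blast
qed

definition weight :: "nat \<Rightarrow> (nat \<Rightarrow> int \<Rightarrow> real) \<Rightarrow> (nat \<Rightarrow> int) \<Rightarrow> (nat \<Rightarrow> int) \<Rightarrow> real" where
  "weight N f r n = (\<Prod>j<d. zext N (f j) ((\<Sum>k<h. \<Xi> j k * n k) + r j))"

lemma prod_conv_eq_weight_psi:
  assumes nz: "psi (\<lambda>k. x k - real_of_int (n k)) \<noteq> 0"
  shows "(\<Prod>j<d. conv N (f j) chi (xi h \<Xi> j x + real_of_int (r j)))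
    = weight N f r n * psi (\<lambda>k. x k - real_of_int (n k))"
proof -
  have "conv N (f j) chi (xi h \<Xi> j x + real_of_int (r j))
      = zext N (f j) ((\<Sum>k<h. \<Xi> j k * n k) + r j) * chi (xi h \<Xi> j (\<lambda>k. x k - real_of_int (n k)))"
    if j: "j < d" for j
  proof -
    define a where "a = (\<Sum>k<h. \<Xi> j k * n k) + r j"
    have t: "xi h \<Xi> j x + real_of_int (r j) - real_of_int a = xi h \<Xi> j (\<lambda>k. x k - real_of_int (n k))"
      unfolding a_def xi_diff xi_of_int by simp
    have near: "\<bar>xi h \<Xi> j x + real_of_int (r j) - real_of_int a\<bar> \<le> \<eta>"
      unfolding t using psi_nonzero_xi[OF nz j] .
    have "conv N (f j) chi (xi h \<Xi> j x + real_of_int (r j))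
        = zext N (f j) a * chi (xi h \<Xi> j x + real_of_int (r j) - real_of_int a)"
    proof (rule conv_eq_single_term)
      fix a' :: int assume "a' \<noteq> a"
      then have "1 \<le> \<bar>real_of_int a' - real_of_int a\<bar>" by linarith
      then show "chi (xi h \<Xi> j x + real_of_int (r j) - real_of_int a') = 0"
        using near eta by (intro chi_eq_0) linarith
    qed
    also have "\<dots> = zext N (f j) a * chi (xi h \<Xi> j (\<lambda>k. x k - real_of_int (n k)))"
      by (simp only: t)
    finally show ?thesis unfolding a_def .
  qed
  then show ?thesis unfolding weight_def psi_def by (simp add: prod.distrib)
qed

lemma lattice_point_near_xi:
  assumes near: "\<And>j. j < d \<Longrightarrow> \<bar>xi h \<Xi> j x - B j\<bar> \<le> \<eta>" and B: "\<And>j. j < d \<Longrightarrow> B j \<in> \<int>"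
  obtains n where "n \<in> int_vecs h" "\<forall>j<d. xi h \<Xi> j (\<lambda>k. real_of_int (n k)) = B j"
proof -
  have "\<bar>xi h \<Xi> j x - B j\<bar> \<le> \<delta>" if "j < d" for j using near[OF that] eta by linarith
  then have "\<forall>j\<in>{..<d}. B j \<in> \<int> \<and> \<bar>(\<Sum>k\<in>{..<h}. realmat \<Xi> j k * x k) - B j\<bar> \<le> \<delta>"
    using B by (simp add: xi_eq_sum_realmat)
  then obtain z where "\<forall>j\<in>{..<d}. (\<Sum>k\<in>{..<h}. realmat \<Xi> j k * z k) = B j"
    using Xi_near_integers unfolding near_integers_in_range_def by blast
  then have "\<forall>j<d. xi h \<Xi> j z = B j" by (simp add: xi_eq_sum_realmat)
  with B show ?thesis using Xi_ok_lattice_preimage[OF Xi] that by blast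
qed

lemma prod_conv_nonzero_lattice_point:
  assumes nz: "(\<Prod>j<d. conv N (f j) chi (xi h \<Xi> j x + real_of_int (r j))) \<noteq> 0"
  obtains n where "n \<in> int_vecs h" "psi (\<lambda>k. x k - real_of_int (n k)) \<noteq> 0"
proof -
  have "\<forall>j. \<exists>b::int. j < d \<longrightarrow> chi (xi h \<Xi> j x + real_of_int (r j) - of_int b) \<noteq> 0"
  proof (intro allI)
    fix j
    show "\<exists>b::int. j < d \<longrightarrow> chi (xi h \<Xi> j x + real_of_int (r j) - of_int b) \<noteq> 0"
    proof (cases "j < d")
      case True
      then have "conv N (f j) chi (xi h \<Xi> j x + real_of_int (r j)) \<noteq> 0" using nz by simp
      then obtain b :: int where "chi (xi h \<Xi> j x + real_of_int (r j) - of_int b) \<noteq> 0"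
        by (rule conv_nonzero_imp)
      then show ?thesis by blast
    qed simp
  qed
  from choice[OF this] obtain b
    where b: "\<And>j. j < d \<Longrightarrow> chi (xi h \<Xi> j x + real_of_int (r j) - of_int (b j)) \<noteq> 0"
    by blast
  define B where "B j = real_of_int (b j - r j)" for j
  have near: "\<bar>xi h \<Xi> j x - B j\<bar> \<le> \<eta>" if "j < d" for j
  proof -
    have "\<not> \<eta> < \<bar>xi h \<Xi> j x + real_of_int (r j) - of_int (b j)\<bar>" using b[OF that] chi_eq_0 by blast
    then show ?thesis by (simp add: B_def algebra_simps)
  qed
  have "B j \<in> \<int>" for j unfolding B_def by (rule Ints_of_int)
  then obtain n where n: "n \<in> int_vecs h" and Xn: "\<forall>j<d. xi h \<Xi> j (\<lambda>k. real_of_int (n k)) = B j"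
    using lattice_point_near_xi[OF near] by blast
  have "chi (xi h \<Xi> j (\<lambda>k. x k - real_of_int (n k))) \<noteq> 0" if "j < d" for j
  proof -
    have "xi h \<Xi> j (\<lambda>k. x k - real_of_int (n k)) = xi h \<Xi> j x + real_of_int (r j) - of_int (b j)"
      using Xn that by (simp add: xi_diff B_def)
    then show ?thesis using b[OF that] by simp
  qed
  then have "psi (\<lambda>k. x k - real_of_int (n k)) \<noteq> 0" unfolding psi_def by simp
  then show ?thesis using n that by blast
qed

lemma prod_conv_eq_sum_psi:
  assumes A: "finite A" "A \<subseteq> int_vecs h" "\<And>n. n \<in> int_vecs h \<Longrightarrow> weight N f r n \<noteq> 0 \<Longrightarrow> n \<in> A"
  shows "(\<Prod>j<d. conv N (f j) chi (xi h \<Xi> j x + real_of_int (r j)))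
         = (\<Sum>n\<in>A. weight N f r n * psi (\<lambda>k. x k - real_of_int (n k)))"
proof (cases "(\<Prod>j<d. conv N (f j) chi (xi h \<Xi> j x + real_of_int (r j))) = 0")
  case True
  have "weight N f r n * psi (\<lambda>k. x k - real_of_int (n k)) = 0" if "n \<in> A" for n
    using prod_conv_eq_weight_psi[of x n N f r] True by auto
  then show ?thesis unfolding True by (simp add: sum.neutral)
next
  case False
  then obtain n where n: "n \<in> int_vecs h" and nz: "psi (\<lambda>k. x k - real_of_int (n k)) \<noteq> 0"
    by (rule prod_conv_nonzero_lattice_point)
  have other: "psi (\<lambda>k. x k - real_of_int (n' k)) = 0" if "n' \<in> A" "n' \<noteq> n" for n'
    using psi_shift_unique[OF n _ nz] that A(2) by blast
  have "(\<Sum>n'\<in>A. weight N f r n' * psi (\<lambda>k. x k - real_of_int (n' k)))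
      = (\<Sum>n'\<in>A. if n' = n then weight N f r n * psi (\<lambda>k. x k - real_of_int (n k)) else 0)"
    using other by (intro sum.cong) auto
  also have "\<dots> = weight N f r n * psi (\<lambda>k. x k - real_of_int (n k))"
    using A n False prod_conv_eq_weight_psi[OF nz] by (auto simp: sum.delta)
  finally show ?thesis using prod_conv_eq_weight_psi[OF nz] by simp
qed

end

context smoothing_kernel
begin

lemma local_average_error:
  assumes \<phi>: "\<phi> \<in> borel_measurable (lborel_pi h)" "\<And>x. \<bar>\<phi> x\<bar> \<le> 1"
    and close: "\<And>x. (\<forall>k<h. \<bar>x k - v k\<bar> \<le> K1 * \<eta>) \<Longrightarrow> \<bar>\<phi> v - \<phi> x\<bar> \<le> E"
  shows "\<bar>\<phi> v - 1 / W * (\<integral>x. psi (\<lambda>k. x k - v k) * \<phi> x \<partial>lborel_pi h)\<bar> \<le> E"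
proof -
  let ?\<psi> = "\<lambda>x. psi (\<lambda>k. x k - v k)"
  have E: "0 \<le> E" using close[of v] K1 eta by simp
  have int: "integrable (lborel_pi h) (\<lambda>x. ?\<psi> x * \<phi> x)" "integrable (lborel_pi h) ?\<psi>"
    using integrable_psi_shift_mult[OF \<phi>] integrable_psi_shift by auto
  have "\<phi> v - 1 / W * (\<integral>x. ?\<psi> x * \<phi> x \<partial>lborel_pi h)
      = 1 / W * ((\<integral>x. ?\<psi> x * \<phi> v \<partial>lborel_pi h) - (\<integral>x. ?\<psi> x * \<phi> x \<partial>lborel_pi h))"
    using integral_psi_shift[of v] W_pos by (simp add: field_simps)
  also have "\<dots> = 1 / W * (\<integral>x. ?\<psi> x * (\<phi> v - \<phi> x) \<partial>lborel_pi h)"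
    using int by (simp add: right_diff_distrib)
  finally have eq: "\<phi> v - 1 / W * (\<integral>x. ?\<psi> x * \<phi> x \<partial>lborel_pi h)
      = 1 / W * (\<integral>x. ?\<psi> x * (\<phi> v - \<phi> x) \<partial>lborel_pi h)" .
  have pointwise: "norm (?\<psi> x * (\<phi> v - \<phi> x)) \<le> ?\<psi> x * E" for x
  proof (cases "?\<psi> x = 0")
    case False
    then have "\<bar>\<phi> v - \<phi> x\<bar> \<le> E" using psi_nonzero_coord[OF False] by (intro close) simp
    then show ?thesis using psi_nonneg by (simp add: abs_mult mult_left_mono)
  qed (use E in simp)
  have int_diff: "integrable (lborel_pi h) (\<lambda>x. ?\<psi> x * (\<phi> v - \<phi> x))"
    using int by (simp add: right_diff_distrib)
  have "\<bar>\<integral>x. ?\<psi> x * (\<phi> v - \<phi> x) \<partial>lborel_pi h\<bar> \<le> (\<integral>x. norm (?\<psi> x * (\<phi> v - \<phi> x)) \<partial>lborel_pi h)"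
    using integral_norm_bound by simp
  also have "\<dots> \<le> (\<integral>x. ?\<psi> x * E \<partial>lborel_pi h)"
    using int int_diff pointwise by (intro integral_mono) auto
  also have "\<dots> = W * E" using integral_psi_shift[of v] by simp
  finally show ?thesis unfolding eq using W_pos by (simp add: abs_mult field_simps)
qed

end

section \<open>Comparison of the discrete and the smoothed counts\<close>

locale smoothing_count = smoothing_kernel +
  fixes m N :: nat and \<epsilon> \<sigma>F \<sigma>G KF KG :: real
    and L :: "nat \<Rightarrow> nat \<Rightarrow> real" and F G :: "(nat \<Rightarrow> real) \<Rightarrow> real"
  assumes N: "1 \<le> N" and \<sigma>: "0 < \<sigma>F" "0 < \<sigma>G" and KF: "0 < KF" and KG: "0 < KG"
    and F: "F_ok N h \<sigma>F KF F" and G: "G_ok m \<epsilon> \<sigma>G KG G"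
    and L_bounded: "\<forall>i<m. \<forall>k<h. \<bar>L i k\<bar> \<le> C"
begin

definition phi :: "(nat \<Rightarrow> real) \<Rightarrow> real" where
  "phi x = F x * G (mv m h L x)"

text \<open>Contains every lattice point within distance 1 of the support of \<open>phi\<close>.\<close>
definition near_support :: "(nat \<Rightarrow> int) set" where
  "near_support = near_kernel {..<m} {..<h} L (real N + 1) (\<epsilon> + real h * C)"

text \<open>Bounds the oscillation of \<open>phi\<close> on the cubes of radius \<open>K1 * \<eta>\<close>, which contain the
  supports of the translates of the kernel.\<close>
definition phi_oscillation :: real where
  "phi_oscillation = K1 * \<eta> * (KF / (\<sigma>F * real N) + KG / \<sigma>G * (real h * C))"

lemma phi_oscillation_nonneg: "0 \<le> phi_oscillation"
  using K1 eta KF KG \<sigma> C N by (simp add: phi_oscillation_def)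

lemma phi_oscillation_le: "phi_oscillation \<le> K1 * (KF + real h * C * KG) * (\<eta> / \<sigma>G + \<eta> / (\<sigma>F * real N))"
proof -
  have "0 \<le> K1 * KF * (\<eta> / \<sigma>G) + K1 * (real h * C * KG) * (\<eta> / (\<sigma>F * real N))"
    using K1 KF KG eta \<sigma> C N by simp
  then show ?thesis unfolding phi_oscillation_def by (simp add: algebra_simps)
qed

lemma phi_range: "0 \<le> phi x" "phi x \<le> 1"
  using F G unfolding phi_def F_ok_def G_ok_def by (auto intro: mult_le_one)

lemma G_mv_lipschitz:
  "\<bar>G (mv m h L x) - G (mv m h L y)\<bar> \<le> KG / \<sigma>G * (real h * C) * vnorm h (\<lambda>k. x k - y k)"
proof -
  have "\<bar>G (mv m h L x) - G (mv m h L y)\<bar> \<le> KG / \<sigma>G * vnorm m (\<lambda>i. mv m h L x i - mv m h L y i)"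
    using G by (simp add: G_ok_def)
  also have "\<dots> \<le> KG / \<sigma>G * (real h * C * vnorm h (\<lambda>k. x k - y k))"
    using KG \<sigma> C by (intro mult_left_mono vnorm_mv_diff_le[OF L_bounded]) auto
  finally show ?thesis by (simp add: mult.assoc)
qed

lemma phi_lipschitz:
  "\<bar>phi x - phi y\<bar> \<le> (KF / (\<sigma>F * real N) + KG / \<sigma>G * (real h * C)) * vnorm h (\<lambda>k. x k - y k)"
proof -
  have "phi x - phi y = (F x - F y) * G (mv m h L x) + F y * (G (mv m h L x) - G (mv m h L y))"
    unfolding phi_def by (simp add: algebra_simps)
  then have "\<bar>phi x - phi y\<bar> \<le> \<bar>F x - F y\<bar> * \<bar>G (mv m h L x)\<bar> + \<bar>F y\<bar> * \<bar>G (mv m h L x) - G (mv m h L y)\<bar>"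
    by (metis abs_mult abs_triangle_ineq)
  also have "\<dots> \<le> \<bar>F x - F y\<bar> + \<bar>G (mv m h L x) - G (mv m h L y)\<bar>"
    using F G unfolding F_ok_def G_ok_def
    by (intro add_mono mult_right_le_one_le mult_left_le_one_le) auto
  also have "\<dots> \<le> KF / (\<sigma>F * real N) * vnorm h (\<lambda>k. x k - y k)
      + KG / \<sigma>G * (real h * C) * vnorm h (\<lambda>k. x k - y k)"
    using F G_mv_lipschitz[of x y] unfolding F_ok_def by (intro add_mono) auto
  finally show ?thesis by (simp add: algebra_simps)
qed

lemma measurable_phi: "phi \<in> borel_measurable (lborel_pi h)"
proof -
  have "F \<in> borel_measurable (lborel_pi h)"
    using F unfolding F_ok_def by (intro vnorm_lipschitz_measurable) blast
  moreover have "(\<lambda>x. G (mv m h L x)) \<in> borel_measurable (lborel_pi h)"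
    by (rule vnorm_lipschitz_measurable[OF G_mv_lipschitz])
  ultimately show ?thesis unfolding phi_def by (rule borel_measurable_times)
qed

lemma phi_nonzero_near_support:
  assumes nz: "phi y \<noteq> 0" and n: "n \<in> int_vecs h" and close: "\<forall>k<h. \<bar>y k - real_of_int (n k)\<bar> \<le> 1"
  shows "n \<in> near_support"
proof -
  have F: "\<forall>k<h. \<bar>y k\<bar> \<le> real N" and G: "\<forall>i<m. \<bar>mv m h L y i\<bar> \<le> \<epsilon>"
    using nz F G unfolding phi_def F_ok_def G_ok_def by auto
  have "vnorm h (\<lambda>k. real_of_int (n k) - y k) \<le> 1"
    using close by (intro vnorm_le) (auto simp: abs_minus_commute)
  then have "real h * C * vnorm h (\<lambda>k. real_of_int (n k) - y k) \<le> real h * C"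
    using C by (simp add: mult_left_le)
  then have Ln: "vnorm m (\<lambda>i. mv m h L (\<lambda>k. real_of_int (n k)) i - mv m h L y i) \<le> real h * C"
    using vnorm_mv_diff_le[OF L_bounded, of "\<lambda>k. real_of_int (n k)" y] C by linarith
  have "\<bar>\<Sum>k\<in>{..<h}. L i k * real_of_int (n k)\<bar> \<le> \<epsilon> + real h * C" if i: "i < m" for i
  proof -
    have "\<bar>mv m h L (\<lambda>k. real_of_int (n k)) i - mv m h L y i\<bar> \<le> real h * C"
      using vnorm_ge[OF i] Ln by (rule order_trans)
    moreover have "\<bar>mv m h L y i\<bar> \<le> \<epsilon>" using G i by blast
    ultimately have "\<bar>mv m h L (\<lambda>k. real_of_int (n k)) i\<bar> \<le> \<epsilon> + real h * C" by linarith
    then show ?thesis using i by (simp add: mv_def)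
  qed
  moreover have "\<bar>real_of_int (n k)\<bar> \<le> real N + 1" if k: "k < h" for k
  proof -
    have "\<bar>y k\<bar> \<le> real N" "\<bar>y k - real_of_int (n k)\<bar> \<le> 1" using F close k by blast+
    then show ?thesis by linarith
  qed
  ultimately show ?thesis using n by (simp add: near_support_def near_kernel_def ibox_def int_vecs_def)
qed

lemma lattice_term_error:
  assumes n: "n \<in> int_vecs h"
  shows "\<bar>phi (\<lambda>k. real_of_int (n k))
      - 1 / W * (\<integral>x. psi (\<lambda>k. x k - real_of_int (n k)) * phi x \<partial>lborel_pi h)\<bar>
    \<le> (if n \<in> near_support then phi_oscillation else 0)"
proof (rule local_average_error[OF measurable_phi])
  show "\<bar>phi x\<bar> \<le> 1" for x using phi_range[of x] by simp
  fix x assume x: "\<forall>k<h. \<bar>x k - real_of_int (n k)\<bar> \<le> K1 * \<eta>"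
  show "\<bar>phi (\<lambda>k. real_of_int (n k)) - phi x\<bar>
    \<le> (if n \<in> near_support then phi_oscillation else 0)"
  proof (cases "n \<in> near_support")
    case True
    have "vnorm h (\<lambda>k. real_of_int (n k) - x k) \<le> K1 * \<eta>"
      using x K1 eta by (intro vnorm_le) (auto simp: abs_minus_commute)
    moreover have "0 \<le> KF / (\<sigma>F * real N) + KG / \<sigma>G * (real h * C)" using KF KG \<sigma> C N by simp
    ultimately have "(KF / (\<sigma>F * real N) + KG / \<sigma>G * (real h * C)) * vnorm h (\<lambda>k. real_of_int (n k) - x k)
        \<le> K1 * \<eta> * (KF / (\<sigma>F * real N) + KG / \<sigma>G * (real h * C))"
      by (metis mult.commute mult_left_mono)
    then show ?thesis using True phi_lipschitz[of "\<lambda>k. real_of_int (n k)" x] by (simp add: phi_oscillation_def)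
  next
    case False
    have "\<forall>k<h. \<bar>real_of_int (n k) - real_of_int (n k)\<bar> \<le> 1" by simp
    then have "phi (\<lambda>k. real_of_int (n k)) = 0"
      using phi_nonzero_near_support[OF _ n] False by blast
    moreover have "\<forall>k<h. \<bar>x k - real_of_int (n k)\<bar> \<le> 1" using x eta by (meson order_trans)
    then have "phi x = 0" using phi_nonzero_near_support[OF _ n] False by blast
    ultimately show ?thesis using False by simp
  qed
qed

end

context smoothing_kernel
begin

lemma abs_weight_le_1:
  assumes "\<forall>j<d. \<forall>n. 1 \<le> n \<and> n \<le> int N \<longrightarrow> \<bar>f j n\<bar> \<le> 1"
  shows "\<bar>weight N f r n\<bar> \<le> 1"
  unfolding weight_def abs_prod using assms by (intro prod_le_1) (auto simp: zext_def)

lemma weight_support: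
  assumes r: "\<forall>j<d. \<bar>real_of_int (r j)\<bar> \<le> R" and n: "n \<in> int_vecs h" and nz: "weight N f r n \<noteq> 0"
  shows "n \<in> ibox {..<h} (K1 * (real N + R))"
proof -
  have "\<bar>xi h \<Xi> j (\<lambda>k. real_of_int (n k))\<bar> \<le> real N + R" if j: "j < d" for j
  proof -
    have "zext N (f j) ((\<Sum>k<h. \<Xi> j k * n k) + r j) \<noteq> 0" using nz j unfolding weight_def by auto
    then have "1 \<le> (\<Sum>k<h. \<Xi> j k * n k) + r j" "(\<Sum>k<h. \<Xi> j k * n k) + r j \<le> int N"
      unfolding zext_def by (auto split: if_splits)
    then have "\<bar>real_of_int (\<Sum>k<h. \<Xi> j k * n k)\<bar> \<le> real N + \<bar>real_of_int (r j)\<bar>" by linarith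
    then show ?thesis unfolding xi_of_int using r j by fastforce
  qed
  then have "\<bar>real_of_int (n k)\<bar> \<le> K1 * (real N + R)" if "k < h" for k
    using that by (intro xi_inverse_bound) auto
  then show ?thesis using n by (auto simp: ibox_def int_vecs_def)
qed

end

context smoothing_count
begin

lemma Tcount_eq_sum:
  assumes A: "finite A" "A \<subseteq> int_vecs h" "\<And>n. n \<in> int_vecs h \<Longrightarrow> weight N f r n \<noteq> 0 \<Longrightarrow> n \<in> A"
  shows "Tcount N m d h L \<Xi> r F G f
    = 1 / real N ^ (h - m) * (\<Sum>n\<in>A. weight N f r n * phi (\<lambda>k. real_of_int (n k)))"
proof -
  have "infsum (\<lambda>n::nat \<Rightarrow> int. (\<Prod>j<d. zext N (f j) ((\<Sum>k<h. \<Xi> j k * n k) + r j))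
        * F (\<lambda>k. real_of_int (n k)) * G (mv m h L (\<lambda>k. real_of_int (n k)))) (int_vecs h)
      = infsum (\<lambda>n. weight N f r n * phi (\<lambda>k. real_of_int (n k))) A"
    using A by (intro infsum_cong_neutral) (auto simp: weight_def phi_def mult.assoc)
  then show ?thesis using A(1) by (simp add: Tcount_def int_vecs_def)
qed

lemma Tint_eq_sum:
  assumes A: "finite A" "A \<subseteq> int_vecs h" "\<And>n. n \<in> int_vecs h \<Longrightarrow> weight N f r n \<noteq> 0 \<Longrightarrow> n \<in> A"
  shows "Tint N m d h L \<Xi> r F G (\<lambda>j. conv N (f j) chi) = 1 / real N ^ (h - m) *
    (\<Sum>n\<in>A. weight N f r n * (\<integral>x. psi (\<lambda>k. x k - real_of_int (n k)) * phi x \<partial>lborel_pi h))"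
proof -
  have "(\<integral>x. (\<Prod>j<d. conv N (f j) chi ((\<Sum>k<h. real_of_int (\<Xi> j k) * x k) + real_of_int (r j)))
        * F x * G (mv m h L x) \<partial>lborel_pi h)
      = (\<integral>x. (\<Sum>n\<in>A. weight N f r n * (psi (\<lambda>k. x k - real_of_int (n k)) * phi x)) \<partial>lborel_pi h)"
    using prod_conv_eq_sum_psi[OF A]
    by (intro Bochner_Integration.integral_cong) (simp_all add: xi_def phi_def sum_distrib_right mult.assoc)
  also have "\<dots> = (\<Sum>n\<in>A. weight N f r n * (\<integral>x. psi (\<lambda>k. x k - real_of_int (n k)) * phi x \<partial>lborel_pi h))"
    using integrable_psi_shift_mult[OF measurable_phi] phi_range
    by (subst Bochner_Integration.integral_sum) auto
  finally show ?thesis by (simp add: Tint_def)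
qed

end

context smoothing_count
begin

lemma sum_lattice_term_error_le:
  assumes f: "\<forall>j<d. \<forall>n. 1 \<le> n \<and> n \<le> int N \<longrightarrow> \<bar>f j n\<bar> \<le> 1"
    and A: "finite A" "A \<subseteq> int_vecs h"
  shows "\<bar>\<Sum>n\<in>A. weight N f r n * (phi (\<lambda>k. real_of_int (n k))
      - 1 / W * (\<integral>x. psi (\<lambda>k. x k - real_of_int (n k)) * phi x \<partial>lborel_pi h))\<bar>
    \<le> phi_oscillation * real (card near_support)"
proof -
  have "\<bar>\<Sum>n\<in>A. weight N f r n * (phi (\<lambda>k. real_of_int (n k))
      - 1 / W * (\<integral>x. psi (\<lambda>k. x k - real_of_int (n k)) * phi x \<partial>lborel_pi h))\<bar>
    \<le> (\<Sum>n\<in>A. if n \<in> near_support then phi_oscillation else 0)"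
  proof (rule order_trans[OF sum_abs sum_mono])
    fix n assume "n \<in> A"
    then have "\<bar>phi (\<lambda>k. real_of_int (n k))
        - 1 / W * (\<integral>x. psi (\<lambda>k. x k - real_of_int (n k)) * phi x \<partial>lborel_pi h)\<bar>
      \<le> (if n \<in> near_support then phi_oscillation else 0)"
      using lattice_term_error A(2) by blast
    moreover have "\<bar>weight N f r n\<bar> \<le> 1" by (rule abs_weight_le_1[OF f])
    ultimately show "\<bar>weight N f r n * (phi (\<lambda>k. real_of_int (n k))
        - 1 / W * (\<integral>x. psi (\<lambda>k. x k - real_of_int (n k)) * phi x \<partial>lborel_pi h))\<bar>
      \<le> (if n \<in> near_support then phi_oscillation else 0)"
      unfolding abs_mult by (meson abs_ge_zero mult_left_le_one_le order_trans)
  qed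
  also have "\<dots> = phi_oscillation * real (card (A \<inter> near_support))"
    using A(1) by (simp add: sum.If_cases Int_commute)
  also have "\<dots> \<le> phi_oscillation * real (card near_support)"
    using phi_oscillation_nonneg finite_near_kernel[of "{..<h}" "real N + 1"]
    by (intro mult_left_mono) (auto simp: near_support_def intro: card_mono)
  finally show ?thesis .
qed

text \<open>Both counts are sums over the lattice points carrying weight, so their difference is
  controlled by the errors of replacing \<open>phi\<close> at a lattice point by its average against the
  kernel centred there.\<close>

lemma Tcount_Tint_estimate:
  assumes f: "\<forall>j<d. \<forall>n. 1 \<le> n \<and> n \<le> int N \<longrightarrow> \<bar>f j n\<bar> \<le> 1"
    and r: "\<forall>j<d. \<bar>real_of_int (r j)\<bar> \<le> R" and R: "0 \<le> R"
    and B0: "0 \<le> B0" and count: "real (card near_support) \<le> B0 * (2 * (real N + 1) + 1) ^ (h - m)"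
  shows "\<bar>Tcount N m d h L \<Xi> r F G f - 1 / W * Tint N m d h L \<Xi> r F G (\<lambda>j. conv N (f j) chi)\<bar>
    \<le> B0 * 5 ^ (h - m) * (K1 * (KF + real h * C * KG)) * (\<eta> / \<sigma>G + \<eta> / (\<sigma>F * real N))"
proof -
  define A where "A = {n \<in> ibox {..<h} (K1 * (real N + R)). weight N f r n \<noteq> 0}"
  define S where "S = (\<Sum>n\<in>A. weight N f r n * (phi (\<lambda>k. real_of_int (n k))
      - 1 / W * (\<integral>x. psi (\<lambda>k. x k - real_of_int (n k)) * phi x \<partial>lborel_pi h)))"
  have Nr: "1 \<le> real N" using N by simp
  have "finite (ibox {..<h} (K1 * (real N + R)))" using finite_card_ibox K1 R by simp
  then have A: "finite A" "A \<subseteq> int_vecs h" "\<And>n. n \<in> int_vecs h \<Longrightarrow> weight N f r n \<noteq> 0 \<Longrightarrow> n \<in> A"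
    using weight_support[OF r] by (simp_all add: A_def) (auto simp: ibox_def int_vecs_def)
  have T1: "Tcount N m d h L \<Xi> r F G f
      = 1 / real N ^ (h - m) * (\<Sum>n\<in>A. weight N f r n * phi (\<lambda>k. real_of_int (n k)))"
    by (rule Tcount_eq_sum[OF A])
  have T2: "Tint N m d h L \<Xi> r F G (\<lambda>j. conv N (f j) chi) = 1 / real N ^ (h - m) *
      (\<Sum>n\<in>A. weight N f r n * (\<integral>x. psi (\<lambda>k. x k - real_of_int (n k)) * phi x \<partial>lborel_pi h))"
    by (rule Tint_eq_sum[OF A])
  have "Tcount N m d h L \<Xi> r F G f - 1 / W * Tint N m d h L \<Xi> r F G (\<lambda>j. conv N (f j) chi)
      = 1 / real N ^ (h - m) * ((\<Sum>n\<in>A. weight N f r n * phi (\<lambda>k. real_of_int (n k)))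
        - 1 / W * (\<Sum>n\<in>A. weight N f r n * (\<integral>x. psi (\<lambda>k. x k - real_of_int (n k)) * phi x \<partial>lborel_pi h)))"
    unfolding T1 T2 by (simp add: algebra_simps)
  also have "\<dots> = 1 / real N ^ (h - m) * S"
  proof -
    have "S = (\<Sum>n\<in>A. weight N f r n * phi (\<lambda>k. real_of_int (n k)))
      - 1 / W * (\<Sum>n\<in>A. weight N f r n * (\<integral>x. psi (\<lambda>k. x k - real_of_int (n k)) * phi x \<partial>lborel_pi h))"
      unfolding S_def by (simp add: sum_distrib_left right_diff_distrib sum_subtractf mult.left_commute)
    then show ?thesis by simp
  qed
  finally have "\<bar>Tcount N m d h L \<Xi> r F G f - 1 / W * Tint N m d h L \<Xi> r F G (\<lambda>j. conv N (f j) chi)\<bar>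
      = \<bar>S\<bar> / real N ^ (h - m)"
    by (simp add: abs_divide)
  also have "\<dots> \<le> phi_oscillation * (B0 * (5 * real N) ^ (h - m)) / real N ^ (h - m)"
  proof (rule divide_right_mono)
    have "\<bar>S\<bar> \<le> phi_oscillation * real (card near_support)"
      unfolding S_def by (rule sum_lattice_term_error_le[OF f A(1,2)])
    also have "\<dots> \<le> phi_oscillation * (B0 * (5 * real N) ^ (h - m))"
      using count Nr B0 phi_oscillation_nonneg
      by (intro mult_left_mono order_trans[OF count] power_mono) auto
    finally show "\<bar>S\<bar> \<le> phi_oscillation * (B0 * (5 * real N) ^ (h - m))" .
  qed simp
  also have "\<dots> = B0 * 5 ^ (h - m) * phi_oscillation" using Nr by (simp add: power_mult_distrib)
  also have "\<dots> \<le> B0 * 5 ^ (h - m) * (K1 * (KF + real h * C * KG) * (\<eta> / \<sigma>G + \<eta> / (\<sigma>F * real N)))"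
    using phi_oscillation_le B0 by (intro mult_left_mono) auto
  finally show ?thesis by (simp add: mult.assoc)
qed

end

context smoothing_kernel
begin

lemma normalised_W_bounds: "(1 / (real h * C)) ^ h \<le> W / \<eta> ^ h" "W / \<eta> ^ h \<le> (2 * K1) ^ h"
proof -
  have "(1 / (real h * C)) ^ h * \<eta> ^ h \<le> W" using W_ge by (simp add: power_divide)
  then show "(1 / (real h * C)) ^ h \<le> W / \<eta> ^ h" using eta by (simp add: pos_le_divide_eq)
  have "W \<le> (2 * K1) ^ h * \<eta> ^ h" using W_le by (simp add: power_mult_distrib)
  then show "W / \<eta> ^ h \<le> (2 * K1) ^ h" using eta by (simp add: pos_divide_le_eq)
qed

lemma count_approximation:
  assumes K: "(real h * C) ^ h \<le> K" "(2 * K1) ^ h \<le> K" and R: "0 \<le> R" and KF: "0 < KF" and KG: "0 < KG"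
    and B0: "0 \<le> B0" and count: "\<And>L N'. L_ok m h c C L \<Longrightarrow> 0 \<le> N' \<Longrightarrow>
      real (card (near_kernel {..<m} {..<h} L N' (\<epsilon> + real h * C))) \<le> B0 * (2 * N' + 1) ^ (h - m)"
  shows "\<exists>CX. 1 / K \<le> CX \<and> CX \<le> K \<and>
    (\<forall>N \<sigma>F \<sigma>G L F G r f.
       1 \<le> N \<and> 0 < \<sigma>F \<and> 0 < \<sigma>G \<and> L_ok m h c C L \<and> F_ok N h \<sigma>F KF F \<and> G_ok m \<epsilon> \<sigma>G KG G
       \<and> (\<forall>j<d. \<bar>real_of_int (r j)\<bar> \<le> R)
       \<and> (\<forall>j<d. \<forall>n. 1 \<le> n \<and> n \<le> int N \<longrightarrow> \<bar>f j n\<bar> \<le> 1) \<longrightarrow>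
       \<bar>Tcount N m d h L \<Xi> r F G f - 1 / (CX * \<eta> ^ h) * Tint N m d h L \<Xi> r F G (\<lambda>j. conv N (f j) chi)\<bar>
       \<le> B0 * 5 ^ (h - m) * (K1 * (KF + real h * C * KG)) * (\<eta> / \<sigma>G + \<eta> / (\<sigma>F * real N)))"
proof (intro exI[of _ "W / \<eta> ^ h"] conjI allI impI)
  have "1 / K \<le> 1 / (real h * C) ^ h" using K(1) C h by (simp add: frac_le)
  then show "1 / K \<le> W / \<eta> ^ h" using normalised_W_bounds(1) by (simp add: power_one_over)
  show "W / \<eta> ^ h \<le> K" using normalised_W_bounds(2) K(2) by linarith
  fix N :: nat and \<sigma>F \<sigma>G :: real and L F G and r :: "nat \<Rightarrow> int" and f :: "nat \<Rightarrow> int \<Rightarrow> real"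
  assume H: "1 \<le> N \<and> 0 < \<sigma>F \<and> 0 < \<sigma>G \<and> L_ok m h c C L \<and> F_ok N h \<sigma>F KF F \<and> G_ok m \<epsilon> \<sigma>G KG G
    \<and> (\<forall>j<d. \<bar>real_of_int (r j)\<bar> \<le> R) \<and> (\<forall>j<d. \<forall>n. 1 \<le> n \<and> n \<le> int N \<longrightarrow> \<bar>f j n\<bar> \<le> 1)"
  interpret smoothing_count d h \<Xi> C chi \<eta> K1 \<delta> m N \<epsilon> \<sigma>F \<sigma>G KF KG L F G
    using Xi Xi_inverse_bounded Xi_near_integers chi_measurable chi_range chi_supported eta K1 C h
      H KF KG by unfold_locales (auto simp: L_ok_def)
  have "W / \<eta> ^ h * \<eta> ^ h = W" using eta by simp
  moreover have "real (card near_support) \<le> B0 * (2 * (real N + 1) + 1) ^ (h - m)"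
    unfolding near_support_def using H by (intro count) auto
  ultimately show "\<bar>Tcount N m d h L \<Xi> r F G f - 1 / (W / \<eta> ^ h * \<eta> ^ h) * Tint N m d h L \<Xi> r F G (\<lambda>j. conv N (f j) chi)\<bar>
       \<le> B0 * 5 ^ (h - m) * (K1 * (KF + real h * C * KG)) * (\<eta> / \<sigma>G + \<eta> / (\<sigma>F * real N))"
    using Tcount_Tint_estimate[of f r R B0] H R B0 by simp
qed

end

lemma Xi_ok_uniform_constants:
  obtains K1 \<delta> where "K1 > 0" "\<delta> > 0"
    "\<And>\<Xi>. Xi_ok d h C \<Xi> \<Longrightarrow> inverse_bounded K1 {..<d} {..<h} (realmat \<Xi>)"
    "\<And>\<Xi>. Xi_ok d h C \<Xi> \<Longrightarrow> near_integers_in_range \<delta> {..<d} {..<h} (realmat \<Xi>)"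
proof -
  have C: "1 \<le> max 1 C" by simp
  obtain K1 where K1: "K1 > 0" and inv: "\<forall>J I A. finite I \<and> card I = h \<and> int_matrix_bounded (max 1 C) J I A
      \<and> matrix_injective J I A \<longrightarrow> inverse_bounded K1 J I A"
    using int_matrix_inverse_bounded[OF C] by blast
  obtain \<delta> where \<delta>: "\<delta> > 0" and near: "\<forall>J I A. finite I \<and> card I = h \<and> int_matrix_bounded (max 1 C) J I A
      \<and> matrix_injective J I A \<longrightarrow> near_integers_in_range \<delta> J I A"
    using int_matrix_near_integers_in_range[OF C] by blast
  show ?thesis
    using inv near Xi_ok_int_matrix_bounded[of d h C _ "max 1 C"] Xi_ok_matrix_injective[of d h C]
    by (intro that[OF K1 \<delta>]) auto
qed

lemma L_ok_near_kernel_count: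
  assumes "c > 0" "e \<ge> 0"
  obtains B0 where "B0 \<ge> 0" "\<And>L N'. L_ok m h c C L \<Longrightarrow> 0 \<le> N' \<Longrightarrow>
    real (card (near_kernel {..<m} {..<h} L N' e)) \<le> B0 * (2 * N' + 1) ^ (h - m)"
proof -
  obtain B0 where B0: "B0 \<ge> 0" and count: "\<forall>R I L N'. finite R \<and> finite I \<and> card R = m \<and> N' \<ge> 0
      \<and> (\<forall>i\<in>R. \<forall>k\<in>I. \<bar>L i k\<bar> \<le> C) \<and> rows_robust c R I L
      \<longrightarrow> real (card (near_kernel R I L N' e)) \<le> B0 * (2 * N' + 1) ^ (card I - card R)"
    using lattice_count_near_rows[OF assms, of m C] by blast
  show ?thesis
  proof (rule that[OF B0])
    fix L and N' :: real assume L: "L_ok m h c C L" and N': "0 \<le> N'"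
    then show "real (card (near_kernel {..<m} {..<h} L N' e)) \<le> B0 * (2 * N' + 1) ^ (h - m)"
      using count[rule_format, of "{..<m}" "{..<h}" N' L] L_ok_rows_robust[OF L assms(1)]
      by (simp add: L_ok_def)
  qed
qed

theorem lemma5p4:
  fixes m d h :: nat and C :: real
  assumes "m + 2 \<le> h" and "h \<le> d" and "0 < C"
  shows "\<exists>K>0. \<forall>\<epsilon>>0. \<exists>\<eta>0>0. \<forall>c>0. \<forall>KF>0. \<forall>KG>0. \<forall>R>0. \<exists>B.
    \<forall>\<eta>. 0 < \<eta> \<and> \<eta> < \<eta>0 \<longrightarrow>
    (\<forall>\<Xi> chi. Xi_ok d h C \<Xi> \<and> chi \<in> borel_measurable borel \<and> (\<forall>x. 0 \<le> chi x \<and> chi x \<le> 1)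
        \<and> eta_supported \<eta> chi \<longrightarrow>
      (\<exists>CX. 1 / K \<le> CX \<and> CX \<le> K \<and>
        (\<forall>N \<sigma>F \<sigma>G L F G r f.
           1 \<le> N \<and> 0 < \<sigma>F \<and> 0 < \<sigma>G \<and> L_ok m h c C L \<and> F_ok N h \<sigma>F KF F \<and> G_ok m \<epsilon> \<sigma>G KG G
           \<and> (\<forall>j<d. \<bar>real_of_int (r j)\<bar> \<le> R)
           \<and> (\<forall>j<d. \<forall>n. 1 \<le> n \<and> n \<le> int N \<longrightarrow> \<bar>f j n\<bar> \<le> 1) \<longrightarrow>
           \<bar>Tcount N m d h L \<Xi> r F G f
             - 1 / (CX * \<eta> ^ h) * Tint N m d h L \<Xi> r F G (\<lambda>j. conv N (f j) chi)\<bar>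
           \<le> B * (\<eta> / \<sigma>G + \<eta> / (\<sigma>F * real N)))))"
proof -
  obtain K1 \<delta> where K1: "K1 > 0" and \<delta>: "\<delta> > 0"
    and Xi: "\<And>\<Xi>. Xi_ok d h C \<Xi> \<Longrightarrow> inverse_bounded K1 {..<d} {..<h} (realmat \<Xi>)"
      "\<And>\<Xi>. Xi_ok d h C \<Xi> \<Longrightarrow> near_integers_in_range \<delta> {..<d} {..<h} (realmat \<Xi>)"
    using Xi_ok_uniform_constants[of d h C] by blast
  define K where "K = (real h * C) ^ h + (2 * K1) ^ h"
  have "0 \<le> (real h * C) ^ h" "0 < (2 * K1) ^ h" using assms(3) K1 by simp_all
  then have K: "0 < K" "(real h * C) ^ h \<le> K" "(2 * K1) ^ h \<le> K" unfolding K_def by linarith+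
  define \<eta>0 where "\<eta>0 = min (1/4) (min \<delta> (1 / K1))"
  have "\<eta>0 > 0" using \<delta> K1 by (simp add: \<eta>0_def)
  show ?thesis
  proof (rule exI[of _ K], intro conjI allI impI K(1), rule exI[of _ \<eta>0],
      intro conjI allI impI \<open>\<eta>0 > 0\<close>, goal_cases)
    case (1 \<epsilon> c KF KG R)
    note pos = 1
    obtain B0 where B0: "B0 \<ge> 0" and count: "\<And>L N'. L_ok m h c C L \<Longrightarrow> 0 \<le> N' \<Longrightarrow>
        real (card (near_kernel {..<m} {..<h} L N' (\<epsilon> + real h * C))) \<le> B0 * (2 * N' + 1) ^ (h - m)"
      using L_ok_near_kernel_count[of c "\<epsilon> + real h * C" m h C] pos assms(3) by auto
    show ?case
    proof (rule exI[of _ "B0 * 5 ^ (h - m) * (K1 * (KF + real h * C * KG))"], intro allI impI, goal_cases)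
      case (1 \<eta> \<Xi> chi)
      then interpret smoothing_kernel d h \<Xi> C chi \<eta> K1 \<delta>
        using K1 assms Xi by unfold_locales (auto simp: \<eta>0_def field_simps)
      show ?case using K(2,3) pos B0 count by (intro count_approximation) auto
    qed
  qed
qed

end
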